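(* Setting as in the context. (a) For $(\sigma,\tau)\in G$, one has $L(\sigma,\tau)=L$ if and only if $(\sigma,\tau)\in H$. (b) There exists a strict violation of $(M,N)$ if and only if there exists $(\sigma,\tau)\in G$ such that $L(\sigma,\tau)>L$ in the monomial order.
   Context: Let $K$ be a field and $\mathcal{Q}$ a bipartite quiver (every arrow goes from a source vertex to a sink vertex) with arrows $h_1,\dots,h_r$ and a nonnegative integer $m_\gamma$ attached to each vertex $\gamma$. For each $k$ let $X^{(k)}=[x^{(k)}_{ij}]$ be an $m_{{\rm t}(h_k)}\times m_{{\rm s}(h_k)}$ matrix of distinct independent variables (all variables distinct), in $K[X]$. For a sink $\alpha$, $A_\alpha$ is the horizontal concatenation $[X^{(r_1)}|\cdots|X^{(r_s)}]$ over the arrows $h_{r_1},\dots,h_{r_s}$ ($r_1<\dots<r_s$) with target $\alpha$; for a source $\beta$, $A_\beta$ is the vertical stacking of $X^{(r'_1)},\dots,X^{(r'_t)}$ over the arrows with source $\beta$ ($r'_1<\dots<r'_t$). Fix a lexicographic monomial order $>$ consistent with every $A_\gamma$ (in each $A_\gamma$ the variables strictly decrease from left to right along rows and from top to bottom along columns). Fix an arrow from a source $\gamma_2$ to a sink $\gamma_1$, let $A=A_{\gamma_1}$, $B=A_{\gamma_2}$, let $u,v$ be positive integers, let $M$ be a $u\times u$ minor of $A$ and $N$ a $v\times v$ minor of $B$. Let $L=\mathrm{lcm}(\mathrm{LM}(M),\mathrm{LM}(N))=x_{p_1}x_{p_2}\cdots x_{p_l}$ where $x_{p_1}>x_{p_2}>\dots>x_{p_l}$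 and $p_i=(\alpha_i,\beta_i,r_i)$ means $x_{p_i}=x^{(r_i)}_{\alpha_i\beta_i}$. Let $S_M=\{i: x_{p_i}\mid \mathrm{LM}(M)\}$ and $S_N=\{i: x_{p_i}\mid\mathrm{LM}(N)\}$. Let $\mathrm{Sym}(S_M)$ (resp. $\mathrm{Sym}(S_N)$) be the group of permutations of $\{1,\dots,l\}$ fixing every index outside $S_M$ (resp. $S_N$), and $G=\mathrm{Sym}(S_M)\times\mathrm{Sym}(S_N)$. For $(\sigma,\tau)\in G$ define the monomial $L(\sigma,\tau)=\prod_{i=1}^l x^{(r_i)}_{\alpha_{\sigma(i)},\beta_{\tau(i)}}$ (so $L(1,1)=L$). Let $H=\{(\pi,\pi)\}$ where $\pi$ ranges over permutations of $\{1,\dots,l\}$ fixing every index outside $S_M\cap S_N$ and satisfying $r_{\pi(i)}=r_i$ for all $i$. A strict violation of $(M,N)$ is a triple $(p_i,p_j,p_k)$ with distinct indices $i\in S_M$, $j\in S_N$, $k\in S_M\cap S_N$ such that $r_i=r_j=r_k$, $\alpha_i<\alpha_j<\alpha_k$ and $\beta_j<\beta_i<\beta_k$. *)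

theory Defs
  imports Main "HOL-Library.Poly_Mapping" "HOL-Combinatorics.Permutations"
begin

text \<open>Variables x^(k)_(a b) are encoded as triples (a, b, k): row a, column b of the
  matrix X^(k) (all indices 0-based; arrows are numbered 0..r-1 in the given order).\<close>

type_synonym var = "nat \<times> nat \<times> nat"
type_synonym mono = "var \<Rightarrow>\<^sub>0 nat"
type_synonym 'k mpoly = "mono \<Rightarrow>\<^sub>0 'k"

definition Var :: "var \<Rightarrow> 'k::comm_ring_1 mpoly" where
  "Var x = Poly_Mapping.single (Poly_Mapping.single x 1) 1"

definition valid_var :: "nat \<Rightarrow> (nat \<Rightarrow> 'v) \<Rightarrow> (nat \<Rightarrow> 'v) \<Rightarrow> ('v \<Rightarrow> nat) \<Rightarrow> var \<Rightarrow> bool" where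
  "valid_var r src tgt m x = (case x of (a, b, k) \<Rightarrow> k < r \<and> a < m (tgt k) \<and> b < m (src k))"

definition lex_gt :: "(var \<Rightarrow> var \<Rightarrow> bool) \<Rightarrow> mono \<Rightarrow> mono \<Rightarrow> bool" where
  "lex_gt gt mo1 mo2 = (\<exists>x. Poly_Mapping.lookup mo1 x > Poly_Mapping.lookup mo2 x \<and>
      (\<forall>y. gt y x \<longrightarrow> Poly_Mapping.lookup mo1 y = Poly_Mapping.lookup mo2 y))"

definition LM :: "(var \<Rightarrow> var \<Rightarrow> bool) \<Rightarrow> 'k::comm_ring_1 mpoly \<Rightarrow> mono" where
  "LM gt p = (THE mo. mo \<in> Poly_Mapping.keys p \<and> (\<forall>mo' \<in> Poly_Mapping.keys p. mo' \<noteq> mo \<longrightarrow> lex_gt gt mo mo'))"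

definition mono_lcm :: "mono \<Rightarrow> mono \<Rightarrow> mono" where
  "mono_lcm mo1 mo2 = Abs_poly_mapping (\<lambda>x. max (Poly_Mapping.lookup mo1 x) (Poly_Mapping.lookup mo2 x))"

definition det_var :: "nat \<Rightarrow> (nat \<Rightarrow> nat \<Rightarrow> var) \<Rightarrow> 'k::comm_ring_1 mpoly" where
  "det_var u ent = (\<Sum>\<pi> \<in> {\<pi>. \<pi> permutes {..<u}}.
      of_int (sign \<pi>) * (\<Prod>i<u. Var (ent i (\<pi> i))))"

text \<open>Lexicographic order on pairs (used for column indices (k, b) of A_alpha,
  k the arrow and b the column inside X^(k), and row indices (k, a) of A_beta).\<close>
definition pair_less :: "nat \<times> nat \<Rightarrow> nat \<times> nat \<Rightarrow> bool" where
  "pair_less p q = (fst p < fst q \<or> (fst p = fst q \<and> snd p < snd q))"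

text \<open>Sink alpha: A_alpha = [X^(k1) | ... | X^(ks)]; rows a < m alpha, columns (k, b)
  with t h_k = alpha, b < m (s h_k), ordered by pair_less; entry (a, (k, b)) is x^(k)_(a b).\<close>
definition sink_minor :: "nat \<Rightarrow> (nat \<Rightarrow> 'v) \<Rightarrow> (nat \<Rightarrow> 'v) \<Rightarrow> ('v \<Rightarrow> nat) \<Rightarrow> 'v
     \<Rightarrow> nat \<Rightarrow> nat list \<Rightarrow> (nat \<times> nat) list \<Rightarrow> 'k::comm_ring_1 mpoly \<Rightarrow> bool" where
  "sink_minor r src tgt m \<alpha> u R C M \<longleftrightarrow>
     length R = u \<and> length C = u \<and> sorted_wrt (<) R \<and> sorted_wrt pair_less C \<and>
     (\<forall>a \<in> set R. a < m \<alpha>) \<and>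
     (\<forall>(k, b) \<in> set C. k < r \<and> tgt k = \<alpha> \<and> b < m (src k)) \<and>
     M = det_var u (\<lambda>i j. (R ! i, snd (C ! j), fst (C ! j)))"

text \<open>Source beta: A_beta = vertical stacking of X^(k1), ..., X^(kt); rows (k, a) with
  s h_k = beta, a < m (t h_k), ordered by pair_less; columns b < m beta; entry ((k, a), b)
  is x^(k)_(a b).\<close>
definition source_minor :: "nat \<Rightarrow> (nat \<Rightarrow> 'v) \<Rightarrow> (nat \<Rightarrow> 'v) \<Rightarrow> ('v \<Rightarrow> nat) \<Rightarrow> 'v
     \<Rightarrow> nat \<Rightarrow> (nat \<times> nat) list \<Rightarrow> nat list \<Rightarrow> 'k::comm_ring_1 mpoly \<Rightarrow> bool" where
  "source_minor r src tgt m \<beta> v R C N \<longleftrightarrow>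
     length R = v \<and> length C = v \<and> sorted_wrt pair_less R \<and> sorted_wrt (<) C \<and>
     (\<forall>(k, a) \<in> set R. k < r \<and> src k = \<beta> \<and> a < m (tgt k)) \<and>
     (\<forall>b \<in> set C. b < m \<beta>) \<and>
     N = det_var v (\<lambda>i j. (snd (R ! i), C ! j, fst (R ! i)))"

text \<open>The lexicographic order is given by a strict total order gt on the variables,
  consistent with every A_gamma.\<close>
definition consistent_order :: "nat \<Rightarrow> (nat \<Rightarrow> 'v) \<Rightarrow> (nat \<Rightarrow> 'v) \<Rightarrow> ('v \<Rightarrow> nat)
     \<Rightarrow> (var \<Rightarrow> var \<Rightarrow> bool) \<Rightarrow> bool" where
  "consistent_order r src tgt m gt \<longleftrightarrow>
     (\<forall>x. \<not> gt x x) \<and>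
     (\<forall>x y z. gt x y \<longrightarrow> gt y z \<longrightarrow> gt x z) \<and>
     (\<forall>x y. valid_var r src tgt m x \<longrightarrow> valid_var r src tgt m y \<longrightarrow> x \<noteq> y \<longrightarrow> gt x y \<or> gt y x) \<and>
     \<comment> \<open>sink matrices: along rows\<close>
     (\<forall>a b k b' k'. valid_var r src tgt m (a, b, k) \<longrightarrow> valid_var r src tgt m (a, b', k') \<longrightarrow>
        tgt k = tgt k' \<longrightarrow> pair_less (k, b) (k', b') \<longrightarrow> gt (a, b, k) (a, b', k')) \<and>
     \<comment> \<open>sink matrices: along columns\<close>
     (\<forall>a a' b k. valid_var r src tgt m (a, b, k) \<longrightarrow> valid_var r src tgt m (a', b, k) \<longrightarrow>
        a < a' \<longrightarrow> gt (a, b, k) (a', b, k)) \<and>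
     \<comment> \<open>source matrices: along rows\<close>
     (\<forall>a b b' k. valid_var r src tgt m (a, b, k) \<longrightarrow> valid_var r src tgt m (a, b', k) \<longrightarrow>
        b < b' \<longrightarrow> gt (a, b, k) (a, b', k)) \<and>
     \<comment> \<open>source matrices: along columns\<close>
     (\<forall>a b k a' k'. valid_var r src tgt m (a, b, k) \<longrightarrow> valid_var r src tgt m (a', b, k') \<longrightarrow>
        src k = src k' \<longrightarrow> pair_less (k, a) (k', a') \<longrightarrow> gt (a, b, k) (a', b, k'))"

end

(*
  Both leading monomials are products of diagonals: the variables of LM(M) form a chain in A_alpha
  running strictly right and down, those of LM(N) a chain in A_beta, and every variable of L lies
  on one of the two chains.

  (a) If L(sigma, tau) = L, then sigma fixes the positions in S_M - S_N: otherwise the last moved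
  one and its preimage would need two replacements on the chain of N inside one matrix X^(k),
  ordered oppositely by rows and by columns. Symmetrically tau fixes S_N - S_M, and then the
  two permutations agree on the intersection of S_M and S_N.

  (b) The transpositions (i k) and (j k) of a strict violation (i, j, k) create the variable in
  row alpha_i and column beta_j, which exceeds everything they remove. Conversely, without strict
  violations, a monomial L(sigma, tau) that is not below L can be rewritten, without changing it,
  by pairs (sigma, tau) fixing ever more of the positions p_1 > p_2 > ..., until it equals L.

  Transposing all matrices exchanges sinks and sources; most statements about N and tau are
  obtained this way from their counterparts about M and sigma.
*)
theory Submission
  imports Defs
begin

section \<open>Permutations, monomials and determinants of variable matrices\<close>

lemma permutes_lessThan_less: "\<pi> permutes {..<u} \<Longrightarrow> i < u \<Longrightarrow> \<pi> i < u"
  by (meson lessThan_iff permutes_in_image)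

lemma permutes_fixing_below_ge:
  fixes \<pi> :: "nat \<Rightarrow> nat"
  assumes "\<pi> permutes A" "\<forall>t<n. \<pi> t = t" "n \<le> i"
  shows "n \<le> \<pi> i"
proof (rule ccontr)
  assume "\<not> n \<le> \<pi> i"
  then have "\<pi> (\<pi> i) = \<pi> i"
    using assms(2) by simp
  then have "\<pi> i = i"
    using permutes_inj[OF assms(1)] by (meson injD)
  with \<open>\<not> n \<le> \<pi> i\<close> assms(3) show False
    by simp
qed

lemma permutes_swap_to_front:
  fixes \<pi> :: "nat \<Rightarrow> nat"
  assumes "\<pi> permutes S" "\<forall>t<n. \<pi> t = t" "n \<le> i" "\<pi> i = n \<or> \<pi> n = n"
  defines "\<pi>' \<equiv> if \<pi> i = n then \<pi> \<circ> Transposition.transpose n i else \<pi>"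
  shows "\<pi>' permutes S" "\<forall>t<Suc n. \<pi>' t = t"
    and "x \<noteq> n \<Longrightarrow> x \<noteq> i \<Longrightarrow> \<pi>' x = \<pi> x" "\<pi>' i = (if \<pi> i = n then \<pi> n else \<pi> i)"
proof -
  show "\<pi>' permutes S"
  proof (cases "\<pi> i = n \<and> i \<noteq> n")
    case True
    then have "i \<in> S" "n \<in> S"
      using permutes_not_in[OF assms(1), of i] permutes_in_image[OF assms(1), of i] by auto
    then show ?thesis
      using True permutes_compose[OF permutes_swap_id assms(1)] by (simp add: \<pi>'_def)
  qed (use assms(1) in \<open>auto simp: \<pi>'_def\<close>)
  show "\<forall>t<Suc n. \<pi>' t = t"
    using assms(2-4) by (auto simp: \<pi>'_def less_Suc_eq transpose_def)
  show "x \<noteq> n \<Longrightarrow> x \<noteq> i \<Longrightarrow> \<pi>' x = \<pi> x" "\<pi>' i = (if \<pi> i = n then \<pi> n else \<pi> i)"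
    by (simp_all add: \<pi>'_def)
qed

text \<open>The first coordinate determines the pair on \<open>X\<close>, and the multiset is also that of the pairs
  \<open>(c (\<pi> t), d (\<pi> t))\<close>.\<close>
lemma permutes_preserves_label:
  assumes "finite A" "X \<subseteq> A" "\<pi> permutes X" "inj_on c X"
    and mset_eq: "image_mset (\<lambda>t. (c (\<pi> t), d t)) (mset_set A) = image_mset (\<lambda>t. (c t, d t)) (mset_set A)"
    and "i \<in> X"
  shows "d (\<pi> i) = d i"
proof -
  have fin: "finite X"
    using assms(1,2) finite_subset by blast
  have split: "mset_set A = mset_set X + mset_set (A - X)"
    using assms(1,2) mset_set_Union[of X "A - X"] fin by (simp add: Un_absorb1)
  have "image_mset (\<lambda>t. (c (\<pi> t), d t)) (mset_set (A - X)) =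
        image_mset (\<lambda>t. (c t, d t)) (mset_set (A - X))"
    using assms(1,3) by (intro image_mset_cong) (simp add: permutes_not_in)
  then have "image_mset (\<lambda>t. (c (\<pi> t), d t)) (mset_set X) = image_mset (\<lambda>t. (c t, d t)) (mset_set X)"
    using mset_eq unfolding split by simp
  also have "\<dots> = image_mset (\<lambda>t. (c t, d t)) (image_mset \<pi> (mset_set X))"
    using image_mset_mset_set[OF permutes_inj_on[OF assms(3)]] permutes_image[OF assms(3)] by simp
  also have "\<dots> = image_mset (\<lambda>t. (c (\<pi> t), d (\<pi> t))) (mset_set X)"
    by (simp add: multiset.map_comp comp_def)
  finally have eq_X: "image_mset (\<lambda>t. (c (\<pi> t), d t)) (mset_set X) =
      image_mset (\<lambda>t. (c (\<pi> t), d (\<pi> t))) (mset_set X)" .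
  have "(c (\<pi> i), d i) \<in># image_mset (\<lambda>t. (c (\<pi> t), d t)) (mset_set X)"
    using assms(6) fin by simp
  then have "(c (\<pi> i), d i) \<in># image_mset (\<lambda>t. (c (\<pi> t), d (\<pi> t))) (mset_set X)"
    by (simp only: eq_X)
  then obtain t where t: "t \<in> X" "c (\<pi> i) = c (\<pi> t)" "d i = d (\<pi> t)"
    using fin by auto
  have "\<pi> i = \<pi> t"
    using inj_onD[OF assms(4) t(2)] permutes_in_image[OF assms(3)] assms(6) t(1) by simp
  then show ?thesis
    using t(3) permutes_inj[OF assms(3)] by (simp add: inj_eq)
qed

lemma sorted_wrt_nth_le:
  "sorted_wrt P xs \<Longrightarrow> i \<le> j \<Longrightarrow> j < length xs \<Longrightarrow> xs ! i = xs ! j \<or> P (xs ! i) (xs ! j)"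
  using sorted_wrt_nth_less[of P xs i j] by (cases "i = j") auto

lemma sorted_wrt_nth_eq_iff:
  assumes "sorted_wrt P xs" "\<And>x. \<not> P x x" "i < length xs" "j < length xs"
  shows "xs ! i = xs ! j \<longleftrightarrow> i = j"
proof
  assume "xs ! i = xs ! j"
  then show "i = j"
    using sorted_wrt_nth_less[OF assms(1), of i j] sorted_wrt_nth_less[OF assms(1), of j i] assms(2-4)
    by (cases i j rule: linorder_cases) auto
qed simp

lemma pair_less_irrefl: "\<not> pair_less x x"
  by (simp add: pair_less_def)

lemma lookup_sum_single:
  "Poly_Mapping.lookup (\<Sum>i\<in>A. Poly_Mapping.single (f i) (1::nat)) y = (\<Sum>i\<in>A. if f i = y then 1 else 0)"
  unfolding lookup_sum by (rule sum.cong) (auto simp: lookup_single when_def)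

lemma in_keys_sum_single_iff:
  "finite A \<Longrightarrow> y \<in> Poly_Mapping.keys (\<Sum>i\<in>A. Poly_Mapping.single (f i) (1::nat)) \<longleftrightarrow> y \<in> f ` A"
  unfolding in_keys_iff lookup_sum_single by auto

lemma lookup_sum_single_eq_count:
  "finite A \<Longrightarrow> Poly_Mapping.lookup (\<Sum>i\<in>A. Poly_Mapping.single (f i) (1::nat)) y =
     count (image_mset f (mset_set A)) y"
  by (induction A rule: finite_induct) (simp_all add: lookup_add lookup_single when_def)

lemma sum_single_eq_iff_image_mset_eq:
  assumes "finite A"
  shows "(\<Sum>i\<in>A. Poly_Mapping.single (f i) (1::nat)) = (\<Sum>i\<in>A. Poly_Mapping.single (g i) 1) \<longleftrightarrow>
     image_mset f (mset_set A) = image_mset g (mset_set A)"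
  unfolding poly_mapping_eq_iff fun_eq_iff lookup_sum_single_eq_count[OF assms] multiset_eq_iff ..

lemma keys_sum_single_inj:
  assumes "finite P" "inj_on g P" "\<And>x. x \<in> P \<Longrightarrow> c x \<noteq> 0"
  shows "Poly_Mapping.keys (\<Sum>x\<in>P. Poly_Mapping.single (g x) (c x)) = g ` P"
proof -
  have "Poly_Mapping.lookup (\<Sum>x\<in>P. Poly_Mapping.single (g x) (c x)) y =
        (if y \<in> g ` P then c (the_inv_into P g y) else 0)" for y
  proof (cases "y \<in> g ` P")
    case True
    then obtain x0 where x0: "x0 \<in> P" "y = g x0"
      by blast
    then have "(\<Sum>x\<in>P. c x when g x = y) = (\<Sum>x\<in>P. if x = x0 then c x else 0)"
      using assms(2) by (intro sum.cong) (auto simp: inj_on_eq_iff when_def)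
    also have "\<dots> = c x0"
      using assms(1) x0(1) by simp
    finally show ?thesis
      using x0 assms(2) by (simp add: lookup_sum lookup_single the_inv_into_f_f)
  qed (auto simp: lookup_sum lookup_single intro!: sum.neutral)
  then show ?thesis
    using assms(2,3) by (auto simp: in_keys_iff the_inv_into_f_f split: if_splits)
qed

lemma lookup_mono_lcm:
  "Poly_Mapping.lookup (mono_lcm a b) x = max (Poly_Mapping.lookup a x) (Poly_Mapping.lookup b x)"
proof -
  have "{x. max (Poly_Mapping.lookup a x) (Poly_Mapping.lookup b x) \<noteq> 0} \<subseteq>
        Poly_Mapping.keys a \<union> Poly_Mapping.keys b"
    by (auto simp: in_keys_iff)
  then have "finite {x. max (Poly_Mapping.lookup a x) (Poly_Mapping.lookup b x) \<noteq> 0}"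
    by (rule finite_subset) simp
  then show ?thesis
    unfolding mono_lcm_def by simp
qed

lemma keys_mono_lcm: "Poly_Mapping.keys (mono_lcm a b) = Poly_Mapping.keys a \<union> Poly_Mapping.keys b"
  by (auto simp: in_keys_iff lookup_mono_lcm)

lemma lex_gt_asym:
  assumes total: "\<And>x y. x \<in> V \<Longrightarrow> y \<in> V \<Longrightarrow> x \<noteq> y \<Longrightarrow> gt x y \<or> gt y x"
    and "Poly_Mapping.keys a \<subseteq> V" "Poly_Mapping.keys b \<subseteq> V"
    and "lex_gt gt a b"
  shows "\<not> lex_gt gt b a"
proof
  assume "lex_gt gt b a"
  then obtain z where z: "Poly_Mapping.lookup a z < Poly_Mapping.lookup b z"
    "\<forall>y. gt y z \<longrightarrow> Poly_Mapping.lookup b y = Poly_Mapping.lookup a y"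
    unfolding lex_gt_def by blast
  obtain x where x: "Poly_Mapping.lookup b x < Poly_Mapping.lookup a x"
    "\<forall>y. gt y x \<longrightarrow> Poly_Mapping.lookup a y = Poly_Mapping.lookup b y"
    using \<open>lex_gt gt a b\<close> unfolding lex_gt_def by blast
  have "x \<in> V" "z \<in> V"
    using x(1) z(1) assms(2,3) by (auto simp: in_keys_iff)
  then show False
    using total[of x z] x z by fastforce
qed

lemma lex_gt_sum_single:
  assumes "finite A" "x \<in> f ` A" "x \<notin> g ` A"
    and "\<And>a y. a \<in> A \<Longrightarrow> gt y x \<Longrightarrow> f a = y \<longleftrightarrow> g a = y"
  shows "lex_gt gt (\<Sum>a\<in>A. Poly_Mapping.single (f a) (1::nat)) (\<Sum>a\<in>A. Poly_Mapping.single (g a) 1)"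
  unfolding lex_gt_def lookup_sum_single
proof (intro exI conjI allI impI)
  obtain a0 where "a0 \<in> A" "f a0 = x"
    using assms(2) by blast
  then have "0 < (\<Sum>a\<in>A. if f a = x then 1 else 0::nat)"
    by (intro sum_pos2[OF assms(1)]) auto
  moreover have "(\<Sum>a\<in>A. if g a = x then 1 else 0::nat) = 0"
    using assms(3) by (intro sum.neutral) auto
  ultimately show "(\<Sum>a\<in>A. if g a = x then 1 else 0) < (\<Sum>a\<in>A. if f a = x then 1 else 0::nat)"
    by simp
  show "(\<Sum>a\<in>A. if f a = y then 1 else 0) = (\<Sum>a\<in>A. if g a = y then 1 else 0::nat)" if "gt y x" for y
    using assms(4) that by (intro sum.cong) auto
qed

lemma LM_eqI:
  assumes total: "\<And>x y. x \<in> V \<Longrightarrow> y \<in> V \<Longrightarrow> x \<noteq> y \<Longrightarrow> gt x y \<or> gt y x"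
    and keys_V: "\<And>mo'. mo' \<in> Poly_Mapping.keys p \<Longrightarrow> Poly_Mapping.keys mo' \<subseteq> V"
    and mo: "mo \<in> Poly_Mapping.keys p"
    and greatest: "\<And>mo'. mo' \<in> Poly_Mapping.keys p \<Longrightarrow> mo' \<noteq> mo \<Longrightarrow> lex_gt gt mo mo'"
  shows "LM gt p = mo"
  unfolding LM_def
proof (rule the_equality)
  fix mo'
  assume mo': "mo' \<in> Poly_Mapping.keys p \<and> (\<forall>mo''\<in>Poly_Mapping.keys p. mo'' \<noteq> mo' \<longrightarrow> lex_gt gt mo' mo'')"
  show "mo' = mo"
  proof (rule ccontr)
    assume "mo' \<noteq> mo"
    then have "lex_gt gt mo mo'" "lex_gt gt mo' mo"
      using mo' mo greatest by auto
    then show False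
      using lex_gt_asym[of V gt, OF total keys_V[OF mo] keys_V] mo' by blast
  qed
qed (use mo greatest in blast)

definition perm_monomial :: "nat \<Rightarrow> (nat \<Rightarrow> nat \<Rightarrow> var) \<Rightarrow> (nat \<Rightarrow> nat) \<Rightarrow> mono" where
  "perm_monomial u ent \<pi> = (\<Sum>i<u. Poly_Mapping.single (ent i (\<pi> i)) 1)"

lemma prod_Var:
  "finite A \<Longrightarrow> (\<Prod>i\<in>A. Var (e i) :: 'k::comm_ring_1 mpoly) =
     Poly_Mapping.single (\<Sum>i\<in>A. Poly_Mapping.single (e i) 1) 1"
  by (induction A rule: finite_induct) (simp_all add: Var_def mult_single add.commute)

lemma det_var_eq_sum_single:
  "(det_var u ent :: 'k::comm_ring_1 mpoly) =
     (\<Sum>\<pi>\<in>{\<pi>. \<pi> permutes {..<u}}. Poly_Mapping.single (perm_monomial u ent \<pi>) (of_int (sign \<pi>)))"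
proof -
  have "(of_int (sign \<pi>) :: 'k mpoly) * (\<Prod>i<u. Var (ent i (\<pi> i))) =
        Poly_Mapping.single (perm_monomial u ent \<pi>) (of_int (sign \<pi>))" for \<pi>
    by (simp add: prod_Var perm_monomial_def mult_single flip: single_of_int)
  then show ?thesis
    unfolding det_var_def by simp
qed

lemma keys_perm_monomial:
  "Poly_Mapping.keys (perm_monomial u ent \<pi>) = (\<lambda>i. ent i (\<pi> i)) ` {..<u}"
  unfolding perm_monomial_def by (rule set_eqI) (rule in_keys_sum_single_iff[OF finite_lessThan])

lemma perm_monomial_inj_on:
  assumes "inj_on (case_prod ent) ({..<u} \<times> {..<u})"
  shows "inj_on (perm_monomial u ent) {\<pi>. \<pi> permutes {..<u}}"
proof (rule inj_onI, rule ext)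
  fix \<pi> \<pi>' i
  assume \<pi>: "\<pi> \<in> {\<pi>. \<pi> permutes {..<u}}" and \<pi>': "\<pi>' \<in> {\<pi>. \<pi> permutes {..<u}}"
    and eq: "perm_monomial u ent \<pi> = perm_monomial u ent \<pi>'"
  show "\<pi> i = \<pi>' i"
  proof (cases "i < u")
    case True
    have "ent i (\<pi> i) \<in> Poly_Mapping.keys (perm_monomial u ent \<pi>)"
      using True by (simp add: keys_perm_monomial)
    then obtain j where "j < u" "ent i (\<pi> i) = ent j (\<pi>' j)"
      unfolding eq by (auto simp: keys_perm_monomial)
    moreover have "\<pi> i < u" "\<pi>' j < u"
      using \<pi> \<pi>' True \<open>j < u\<close> by (simp_all add: permutes_lessThan_less)
    ultimately show ?thesis
      using True inj_onD[OF assms, of "(i, \<pi> i)" "(j, \<pi>' j)"] by auto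
  next
    case False
    then show ?thesis
      using \<pi> \<pi>' by (simp add: permutes_not_in)
  qed
qed

lemma keys_det_var:
  assumes "inj_on (case_prod ent) ({..<u} \<times> {..<u})"
  shows "Poly_Mapping.keys (det_var u ent :: 'k::comm_ring_1 mpoly) =
         perm_monomial u ent ` {\<pi>. \<pi> permutes {..<u}}"
  unfolding det_var_eq_sum_single
  by (rule keys_sum_single_inj)
    (use perm_monomial_inj_on[OF assms] in \<open>auto simp: finite_permutations sign_def\<close>)

text \<open>With \<open>i\<^sub>0\<close> the least index moved by \<open>\<pi>\<close>, the variable \<open>ent i\<^sub>0 i\<^sub>0\<close> divides the
  diagonal monomial but not that of \<open>\<pi>\<close>, and by monotonicity no larger variable occurs in either
  one at an index \<open>\<ge> i\<^sub>0\<close>.\<close>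
lemma lex_gt_diagonal_perm_monomial:
  assumes irrefl: "\<And>x. \<not> gt x x" and trans: "\<And>x y z. gt x y \<Longrightarrow> gt y z \<Longrightarrow> gt x z"
    and inj: "inj_on (case_prod ent) ({..<u} \<times> {..<u})"
    and mono: "\<And>i j i' j'. i \<le> i' \<Longrightarrow> j \<le> j' \<Longrightarrow> i' < u \<Longrightarrow> j' < u \<Longrightarrow>
                 ent i j = ent i' j' \<or> gt (ent i j) (ent i' j')"
    and \<pi>: "\<pi> permutes {..<u}" "\<pi> \<noteq> id"
  shows "lex_gt gt (perm_monomial u ent id) (perm_monomial u ent \<pi>)"
proof -
  define i0 where "i0 = (LEAST i. \<pi> i \<noteq> i)"
  have moved: "\<pi> i0 \<noteq> i0"
    unfolding i0_def by (rule LeastI_ex) (use \<pi>(2) in auto)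
  have fixed: "\<forall>i<i0. \<pi> i = i"
    unfolding i0_def using not_less_Least by blast
  have "i0 < u"
    using moved \<pi>(1) by (meson lessThan_iff permutes_not_in)
  have ent_eq: "ent i j = ent i' j' \<longleftrightarrow> i = i' \<and> j = j'" if "i < u" "j < u" "i' < u" "j' < u" for i j i' j'
    using inj_onD[OF inj, of "(i, j)" "(i', j')"] that by auto
  let ?x = "ent i0 i0"
  have below: "ent i j \<noteq> y" if "gt y ?x" "i0 \<le> i" "i0 \<le> j" "i < u" "j < u" for i j y
    using mono[OF that(2-5)] that(1) irrefl trans by metis
  have "Poly_Mapping.lookup (perm_monomial u ent \<pi>) ?x < Poly_Mapping.lookup (perm_monomial u ent id) ?x"
    unfolding perm_monomial_def lookup_sum_single
    using \<open>i0 < u\<close> moved ent_eq \<pi>(1)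
    by (auto simp: permutes_lessThan_less intro!: sum_pos2[of _ i0])
  moreover have "Poly_Mapping.lookup (perm_monomial u ent id) y = Poly_Mapping.lookup (perm_monomial u ent \<pi>) y"
    if "gt y ?x" for y
    unfolding perm_monomial_def lookup_sum_single
  proof (rule sum.cong)
    fix i assume "i \<in> {..<u}"
    moreover have "i0 \<le> \<pi> i" if "i0 \<le> i"
      using permutes_fixing_below_ge[OF \<pi>(1) fixed that] .
    moreover have "\<pi> i < u"
      using \<pi>(1) \<open>i \<in> {..<u}\<close> by (simp add: permutes_lessThan_less)
    ultimately show "(if ent i (id i) = y then 1 else 0) = (if ent i (\<pi> i) = y then 1 else 0)"
      using below[OF that] fixed by (cases "i < i0") auto
  qed simp
  ultimately show ?thesis
    unfolding lex_gt_def by blast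
qed

lemma LM_det_var:
  assumes total: "\<And>x y. x \<in> V \<Longrightarrow> y \<in> V \<Longrightarrow> x \<noteq> y \<Longrightarrow> gt x y \<or> gt y x"
    and irrefl: "\<And>x. \<not> gt x x" and trans: "\<And>x y z. gt x y \<Longrightarrow> gt y z \<Longrightarrow> gt x z"
    and ent_V: "\<And>i j. i < u \<Longrightarrow> j < u \<Longrightarrow> ent i j \<in> V"
    and inj: "inj_on (case_prod ent) ({..<u} \<times> {..<u})"
    and mono: "\<And>i j i' j'. i \<le> i' \<Longrightarrow> j \<le> j' \<Longrightarrow> i' < u \<Longrightarrow> j' < u \<Longrightarrow>
                 ent i j = ent i' j' \<or> gt (ent i j) (ent i' j')"
  shows "LM gt (det_var u ent :: 'k::comm_ring_1 mpoly) = perm_monomial u ent id"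
proof (rule LM_eqI[OF total])
  show "Poly_Mapping.keys mo \<subseteq> V" if "mo \<in> Poly_Mapping.keys (det_var u ent :: 'k mpoly)" for mo
    using that ent_V by (auto simp: keys_det_var[OF inj] keys_perm_monomial permutes_lessThan_less)
qed (auto simp: keys_det_var[OF inj]
      intro: lex_gt_diagonal_perm_monomial[OF irrefl trans inj mono])

lemma sink_minorD:
  assumes "sink_minor r src tgt m \<gamma> u R C M"
  shows "length R = u" "length C = u" "sorted_wrt (<) R" "sorted_wrt pair_less C"
    and "i < u \<Longrightarrow> R ! i < m \<gamma>"
    and "j < u \<Longrightarrow> fst (C ! j) < r \<and> tgt (fst (C ! j)) = \<gamma> \<and> snd (C ! j) < m (src (fst (C ! j)))"
    and "M = det_var u (\<lambda>i j. (R ! i, snd (C ! j), fst (C ! j)))"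
  using assms bspec[of "set C" _ "C ! j"] by (auto simp: sink_minor_def case_prod_beta)

lemma source_minorD:
  assumes "source_minor r src tgt m \<gamma> u R C M"
  shows "length R = u" "length C = u" "sorted_wrt pair_less R" "sorted_wrt (<) C"
    and "i < u \<Longrightarrow> fst (R ! i) < r \<and> src (fst (R ! i)) = \<gamma> \<and> snd (R ! i) < m (tgt (fst (R ! i)))"
    and "j < u \<Longrightarrow> C ! j < m \<gamma>"
    and "M = det_var u (\<lambda>i j. (snd (R ! i), C ! j, fst (R ! i)))"
  using assms bspec[of "set R" _ "R ! i"] by (auto simp: source_minor_def case_prod_beta)

section \<open>Orders consistent with the matrices and diagonals of minors\<close>

text \<open>Transposing every matrix \<open>X\<^bsup>(k)\<^esup>\<close> turns the sink matrices into source matrices and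
  vice versa.\<close>
definition transpose_var :: "var \<Rightarrow> var" where
  "transpose_var x = (fst (snd x), fst x, snd (snd x))"

lemma transpose_var_simp [simp]: "transpose_var (a, b, k) = (b, a, k)"
  by (simp add: transpose_var_def)

definition transpose_order :: "(var \<Rightarrow> var \<Rightarrow> bool) \<Rightarrow> var \<Rightarrow> var \<Rightarrow> bool" where
  "transpose_order gt x y \<longleftrightarrow> gt (transpose_var x) (transpose_var y)"

lemma valid_var_transpose:
  "valid_var r tgt src m (b, a, k) \<longleftrightarrow> valid_var r src tgt m (a, b, k)"
  by (auto simp: valid_var_def)

lemma consistent_order_transpose:
  assumes "consistent_order r src tgt m gt"
  shows "consistent_order r tgt src m (transpose_order gt)"
  using assms unfolding consistent_order_def transpose_order_def
  by (simp add: valid_var_transpose)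

locale consistent_var_order =
  fixes r :: nat and src tgt :: "nat \<Rightarrow> 'v" and m :: "'v \<Rightarrow> nat" and gt :: "var \<Rightarrow> var \<Rightarrow> bool"
  assumes consistent: "consistent_order r src tgt m gt"
begin

abbreviation valid :: "var \<Rightarrow> bool" where
  "valid \<equiv> valid_var r src tgt m"

abbreviation ge :: "var \<Rightarrow> var \<Rightarrow> bool" where
  "ge x y \<equiv> x = y \<or> gt x y"

lemma gt_irrefl: "\<not> gt x x"
  using consistent unfolding consistent_order_def by (elim conjE) blast

lemma gt_trans: "gt x y \<Longrightarrow> gt y z \<Longrightarrow> gt x z"
  using consistent unfolding consistent_order_def by (elim conjE) blast

lemma gt_total: "valid x \<Longrightarrow> valid y \<Longrightarrow> x \<noteq> y \<Longrightarrow> gt x y \<or> gt y x"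
  using consistent unfolding consistent_order_def by (elim conjE) blast

lemma gt_asym: "gt x y \<Longrightarrow> \<not> gt y x"
  using gt_irrefl gt_trans by blast

lemma gt_ge_trans: "gt x y \<Longrightarrow> ge y z \<Longrightarrow> gt x z"
  using gt_trans by blast

lemma sink_entry_ge:
  assumes "valid (a, b, k)" "valid (a', b', k')" "tgt k = tgt k'"
    and "a \<le> a'" "k < k' \<or> (k = k' \<and> b \<le> b')"
  shows "ge (a, b, k) (a', b', k')"
proof -
  have corner: "valid (a, b', k')"
    using assms(1-3) by (simp add: valid_var_def)
  have along_row: "\<forall>a b k b' k'. valid (a, b, k) \<longrightarrow> valid (a, b', k') \<longrightarrow> tgt k = tgt k' \<longrightarrow>
      pair_less (k, b) (k', b') \<longrightarrow> gt (a, b, k) (a, b', k')"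
    and along_column: "\<forall>a a' b k. valid (a, b, k) \<longrightarrow> valid (a', b, k) \<longrightarrow> a < a' \<longrightarrow>
      gt (a, b, k) (a', b, k)"
    using consistent unfolding consistent_order_def by blast+
  have "ge (a, b, k) (a, b', k')"
  proof (cases "k = k' \<and> b = b'")
    case False
    then show ?thesis
      using along_row assms(1,3,5) corner by (auto simp: pair_less_def)
  qed simp
  moreover have "ge (a, b', k') (a', b', k')"
    using along_column assms(2,4) corner by (cases "a = a'") auto
  ultimately show ?thesis
    using gt_trans by blast
qed

lemma source_entry_ge:
  assumes "valid (a, b, k)" "valid (a', b', k')" "src k = src k'"
    and "k < k' \<or> (k = k' \<and> a \<le> a')" "b \<le> b'"
  shows "ge (a, b, k) (a', b', k')"
proof -
  interpret transposed: consistent_var_order r tgt src m "transpose_order gt"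
    using consistent_order_transpose[OF consistent] by unfold_locales
  show ?thesis
    using transposed.sink_entry_ge[of b a k b' a' k'] assms
    by (auto simp: valid_var_transpose transpose_order_def)
qed

lemma lex_gt_asym_valid:
  "Poly_Mapping.keys a \<subseteq> Collect valid \<Longrightarrow> Poly_Mapping.keys b \<subseteq> Collect valid \<Longrightarrow>
   lex_gt gt a b \<Longrightarrow> \<not> lex_gt gt b a"
  using lex_gt_asym[of "Collect valid" gt a b] gt_total by blast

definition sink_diagonal :: "var set \<Rightarrow> bool" where
  "sink_diagonal D \<longleftrightarrow> (\<forall>x\<in>D. valid x) \<and>
     (\<forall>(a, b, k)\<in>D. \<forall>(a', b', k')\<in>D. tgt k = tgt k' \<and>
        (gt (a, b, k) (a', b', k') \<longrightarrow> a < a' \<and> pair_less (k, b) (k', b')))"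

definition source_diagonal :: "var set \<Rightarrow> bool" where
  "source_diagonal D \<longleftrightarrow> (\<forall>x\<in>D. valid x) \<and>
     (\<forall>(a, b, k)\<in>D. \<forall>(a', b', k')\<in>D. src k = src k' \<and>
        (gt (a, b, k) (a', b', k') \<longrightarrow> b < b' \<and> pair_less (k, a) (k', a')))"

lemma LM_det_var_diagonal:
  assumes "\<And>i j. i < u \<Longrightarrow> j < u \<Longrightarrow> valid (ent i j)"
    and "inj_on (case_prod ent) ({..<u} \<times> {..<u})"
    and "\<And>i j i' j'. i \<le> i' \<Longrightarrow> j \<le> j' \<Longrightarrow> i' < u \<Longrightarrow> j' < u \<Longrightarrow> ge (ent i j) (ent i' j')"
  shows "Poly_Mapping.keys (LM gt (det_var u ent :: 'k::comm_ring_1 mpoly)) = (\<lambda>i. ent i i) ` {..<u}"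
    and "i < u \<Longrightarrow> j < u \<Longrightarrow> gt (ent i i) (ent j j) \<Longrightarrow> i < j"
proof -
  have "LM gt (det_var u ent :: 'k mpoly) = perm_monomial u ent id"
  proof (rule LM_det_var[of "Collect valid" gt, OF _ gt_irrefl gt_trans _ assms(2,3)])
    show "gt x y \<or> gt y x" if "x \<in> Collect valid" "y \<in> Collect valid" "x \<noteq> y" for x y
      using gt_total that by simp
    show "ent i j \<in> Collect valid" if "i < u" "j < u" for i j
      using assms(1) that by simp
  qed
  then show "Poly_Mapping.keys (LM gt (det_var u ent :: 'k mpoly)) = (\<lambda>i. ent i i) ` {..<u}"
    by (simp add: keys_perm_monomial)
  show "i < j" if "i < u" "j < u" "gt (ent i i) (ent j j)"
  proof (rule ccontr)
    assume "\<not> i < j"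
    then have "ge (ent j j) (ent i i)"
      using assms(3)[of j i j i] that(1) by simp
    then show False
      using that(3) gt_asym[OF that(3)] gt_irrefl by auto
  qed
qed

lemma sink_minor_LM:
  assumes "sink_minor r src tgt m \<gamma> u R C (M :: 'k::comm_ring_1 mpoly)"
  defines "d \<equiv> \<lambda>i. (R ! i, snd (C ! i), fst (C ! i))"
  shows "Poly_Mapping.keys (LM gt M) = d ` {..<u}"
    and "i < u \<Longrightarrow> j < u \<Longrightarrow> gt (d i) (d j) \<Longrightarrow> i < j"
proof -
  define ent where "ent = (\<lambda>i j. (R ! i, snd (C ! j), fst (C ! j)))"
  note minor = sink_minorD[OF assms(1), folded ent_def]
  have valid: "valid (ent i j)" if "i < u" "j < u" for i j
    using minor(5,6) that by (simp add: ent_def valid_var_def)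
  have inj: "inj_on (case_prod ent) ({..<u} \<times> {..<u})"
    using sorted_wrt_nth_eq_iff[OF minor(3)] sorted_wrt_nth_eq_iff[OF minor(4) pair_less_irrefl] minor(1,2)
    by (auto simp: inj_on_def ent_def prod_eq_iff)
  have mono: "ge (ent i j) (ent i' j')" if "i \<le> i'" "j \<le> j'" "i' < u" "j' < u" for i j i' j'
  proof -
    have "R ! i \<le> R ! i'"
      using sorted_wrt_nth_le[OF minor(3) that(1)] that(3) minor(1) by auto
    moreover have "fst (C ! j) < fst (C ! j') \<or> (fst (C ! j) = fst (C ! j') \<and> snd (C ! j) \<le> snd (C ! j'))"
      using sorted_wrt_nth_le[OF minor(4) that(2)] that(4) minor(2) by (auto simp: pair_less_def)
    ultimately show ?thesis
      unfolding ent_def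
      by (rule sink_entry_ge[rotated 3])
        (use valid[of i j] valid[of i' j'] minor(6)[of j] minor(6)[of j'] that in \<open>auto simp: ent_def\<close>)
  qed
  have d: "d = (\<lambda>i. ent i i)"
    by (simp add: d_def ent_def)
  show "Poly_Mapping.keys (LM gt M) = d ` {..<u}"
    using LM_det_var_diagonal(1)[OF valid inj mono] minor(7) d by simp
  show "i < j" if "i < u" "j < u" "gt (d i) (d j)"
    using LM_det_var_diagonal(2)[OF valid inj mono that(1,2)] that(3) d by simp
qed

lemma sink_minor_LM_diagonal:
  assumes "sink_minor r src tgt m \<gamma> u R C (M :: 'k::comm_ring_1 mpoly)"
  shows "sink_diagonal (Poly_Mapping.keys (LM gt M))"
proof -
  note minor = sink_minorD[OF assms]
  note keys = sink_minor_LM[OF assms]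
  have "tgt k = tgt k' \<and> (gt (a, b, k) (a', b', k') \<longrightarrow> a < a' \<and> pair_less (k, b) (k', b'))"
    if entries: "(a, b, k) \<in> Poly_Mapping.keys (LM gt M)" "(a', b', k') \<in> Poly_Mapping.keys (LM gt M)"
    for a b k a' b' k'
  proof -
    obtain i j where ij: "i < u" "j < u" "(a, b, k) = (R ! i, snd (C ! i), fst (C ! i))"
      "(a', b', k') = (R ! j, snd (C ! j), fst (C ! j))"
      using entries unfolding keys(1) by blast
    then show ?thesis
      using keys(2)[OF ij(1,2)] sorted_wrt_nth_less[OF minor(3), of i j] sorted_wrt_nth_less[OF minor(4), of i j]
        minor(1,2) minor(6)[OF ij(1)] minor(6)[OF ij(2)] by auto
  qed
  moreover have "valid x" if "x \<in> Poly_Mapping.keys (LM gt M)" for x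
    using that minor(5,6) unfolding keys(1) by (auto simp: valid_var_def)
  ultimately show ?thesis
    unfolding sink_diagonal_def by blast
qed

lemma source_minor_LM:
  assumes "source_minor r src tgt m \<gamma> u R C (N :: 'k::comm_ring_1 mpoly)"
  defines "d \<equiv> \<lambda>i. (snd (R ! i), C ! i, fst (R ! i))"
  shows "Poly_Mapping.keys (LM gt N) = d ` {..<u}"
    and "i < u \<Longrightarrow> j < u \<Longrightarrow> gt (d i) (d j) \<Longrightarrow> i < j"
proof -
  define ent where "ent = (\<lambda>i j. (snd (R ! i), C ! j, fst (R ! i)))"
  note minor = source_minorD[OF assms(1), folded ent_def]
  have valid: "valid (ent i j)" if "i < u" "j < u" for i j
    using minor(5,6) that by (simp add: ent_def valid_var_def)
  have inj: "inj_on (case_prod ent) ({..<u} \<times> {..<u})"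
    using sorted_wrt_nth_eq_iff[OF minor(3) pair_less_irrefl] sorted_wrt_nth_eq_iff[OF minor(4)] minor(1,2)
    by (auto simp: inj_on_def ent_def prod_eq_iff)
  have mono: "ge (ent i j) (ent i' j')" if "i \<le> i'" "j \<le> j'" "i' < u" "j' < u" for i j i' j'
  proof -
    have "fst (R ! i) < fst (R ! i') \<or> (fst (R ! i) = fst (R ! i') \<and> snd (R ! i) \<le> snd (R ! i'))"
      using sorted_wrt_nth_le[OF minor(3) that(1)] that(3) minor(1) by (auto simp: pair_less_def)
    moreover have "C ! j \<le> C ! j'"
      using sorted_wrt_nth_le[OF minor(4) that(2)] that(4) minor(2) by auto
    ultimately show ?thesis
      unfolding ent_def
      by (rule source_entry_ge[rotated 3])
        (use valid[of i j] valid[of i' j'] minor(5)[of i] minor(5)[of i'] that in \<open>auto simp: ent_def\<close>)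
  qed
  have d: "d = (\<lambda>i. ent i i)"
    by (simp add: d_def ent_def)
  show "Poly_Mapping.keys (LM gt N) = d ` {..<u}"
    using LM_det_var_diagonal(1)[OF valid inj mono] minor(7) d by simp
  show "i < j" if "i < u" "j < u" "gt (d i) (d j)"
    using LM_det_var_diagonal(2)[OF valid inj mono that(1,2)] that(3) d by simp
qed

lemma source_minor_LM_diagonal:
  assumes "source_minor r src tgt m \<gamma> u R C (N :: 'k::comm_ring_1 mpoly)"
  shows "source_diagonal (Poly_Mapping.keys (LM gt N))"
proof -
  note minor = source_minorD[OF assms]
  note keys = source_minor_LM[OF assms]
  have "src k = src k' \<and> (gt (a, b, k) (a', b', k') \<longrightarrow> b < b' \<and> pair_less (k, a) (k', a'))"
    if entries: "(a, b, k) \<in> Poly_Mapping.keys (LM gt N)" "(a', b', k') \<in> Poly_Mapping.keys (LM gt N)"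
    for a b k a' b' k'
  proof -
    obtain i j where ij: "i < u" "j < u" "(a, b, k) = (snd (R ! i), C ! i, fst (R ! i))"
      "(a', b', k') = (snd (R ! j), C ! j, fst (R ! j))"
      using entries unfolding keys(1) by blast
    then show ?thesis
      using keys(2)[OF ij(1,2)] sorted_wrt_nth_less[OF minor(3), of i j] sorted_wrt_nth_less[OF minor(4), of i j]
        minor(1,2) minor(5)[OF ij(1)] minor(5)[OF ij(2)] by auto
  qed
  moreover have "valid x" if "x \<in> Poly_Mapping.keys (LM gt N)" for x
    using that minor(5,6) unfolding keys(1) by (auto simp: valid_var_def)
  ultimately show ?thesis
    unfolding source_diagonal_def by blast
qed

end

section \<open>The lcm of the two diagonals\<close>

text \<open>The positions \<open>i < l\<close> list the variables \<open>(\<alpha> i, \<beta> i, rr i)\<close> of \<open>L\<close> in decreasing order;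
  \<open>SM\<close> and \<open>SN\<close> are the positions of the diagonal variables of the two minors.\<close>
locale lcm_of_diagonals = consistent_var_order +
  fixes l :: nat and SM SN :: "nat set" and \<alpha> \<beta> rr :: "nat \<Rightarrow> nat"
  assumes decreasing: "s < t \<Longrightarrow> t < l \<Longrightarrow> gt (\<alpha> s, \<beta> s, rr s) (\<alpha> t, \<beta> t, rr t)"
    and SM_Un_SN: "SM \<union> SN = {..<l}"
    and valid_entries: "i < l \<Longrightarrow> valid (\<alpha> i, \<beta> i, rr i)"
    and SM_same_target: "s \<in> SM \<Longrightarrow> t \<in> SM \<Longrightarrow> tgt (rr s) = tgt (rr t)"
    and SN_same_source: "s \<in> SN \<Longrightarrow> t \<in> SN \<Longrightarrow> src (rr s) = src (rr t)"
    and SM_chain: "s \<in> SM \<Longrightarrow> t \<in> SM \<Longrightarrow> s < t \<Longrightarrow>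
      \<alpha> s < \<alpha> t \<and> (rr s < rr t \<or> (rr s = rr t \<and> \<beta> s < \<beta> t))"
    and SN_chain: "s \<in> SN \<Longrightarrow> t \<in> SN \<Longrightarrow> s < t \<Longrightarrow>
      \<beta> s < \<beta> t \<and> (rr s < rr t \<or> (rr s = rr t \<and> \<alpha> s < \<alpha> t))"
begin

definition pvar :: "nat \<Rightarrow> var" where
  "pvar i = (\<alpha> i, \<beta> i, rr i)"

definition qvar :: "(nat \<Rightarrow> nat) \<Rightarrow> (nat \<Rightarrow> nat) \<Rightarrow> nat \<Rightarrow> var" where
  "qvar \<sigma> \<tau> i = (\<alpha> (\<sigma> i), \<beta> (\<tau> i), rr i)"

definition L :: mono where
  "L = (\<Sum>i<l. Poly_Mapping.single (pvar i) 1)"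

definition Lperm :: "(nat \<Rightarrow> nat) \<Rightarrow> (nat \<Rightarrow> nat) \<Rightarrow> mono" where
  "Lperm \<sigma> \<tau> = (\<Sum>i<l. Poly_Mapping.single (qvar \<sigma> \<tau> i) 1)"

definition strict_violation :: bool where
  "strict_violation \<longleftrightarrow> (\<exists>i j k. i \<in> SM \<and> j \<in> SN \<and> k \<in> SM \<inter> SN \<and> i \<noteq> j \<and> i \<noteq> k \<and> j \<noteq> k \<and>
     rr i = rr j \<and> rr j = rr k \<and> \<alpha> i < \<alpha> j \<and> \<alpha> j < \<alpha> k \<and> \<beta> j < \<beta> i \<and> \<beta> i < \<beta> k)"

lemma Lperm_id: "Lperm id id = L"
  by (simp add: Lperm_def L_def qvar_def pvar_def)

lemma pvar_gt: "s < t \<Longrightarrow> t < l \<Longrightarrow> gt (pvar s) (pvar t)"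
  unfolding pvar_def by (rule decreasing)

lemma pvar_eq_iff: "s < l \<Longrightarrow> t < l \<Longrightarrow> pvar s = pvar t \<longleftrightarrow> s = t"
  using pvar_gt[of s t] pvar_gt[of t s] gt_irrefl[of "pvar t"] by (cases s t rule: linorder_cases) auto

lemma SM_less: "i \<in> SM \<Longrightarrow> i < l" and SN_less: "i \<in> SN \<Longrightarrow> i < l"
  using SM_Un_SN by auto

lemma in_SM_or_SN: "i < l \<Longrightarrow> i \<in> SM \<or> i \<in> SN"
  using SM_Un_SN by auto

lemma SM_le: "s \<in> SM \<Longrightarrow> t \<in> SM \<Longrightarrow> s \<le> t \<Longrightarrow>
    \<alpha> s \<le> \<alpha> t \<and> (rr s < rr t \<or> (rr s = rr t \<and> \<beta> s \<le> \<beta> t))"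
  using SM_chain[of s t] by (cases "s = t") auto

lemma SN_le: "s \<in> SN \<Longrightarrow> t \<in> SN \<Longrightarrow> s \<le> t \<Longrightarrow>
    \<beta> s \<le> \<beta> t \<and> (rr s < rr t \<or> (rr s = rr t \<and> \<alpha> s \<le> \<alpha> t))"
  using SN_chain[of s t] by (cases "s = t") auto

lemma SM_\<alpha>_eq_iff: "s \<in> SM \<Longrightarrow> t \<in> SM \<Longrightarrow> \<alpha> s = \<alpha> t \<longleftrightarrow> s = t"
  using SM_chain[of s t] SM_chain[of t s] by (cases s t rule: linorder_cases) auto

lemma SM_column_eq_iff: "s \<in> SM \<Longrightarrow> t \<in> SM \<Longrightarrow> rr s = rr t \<and> \<beta> s = \<beta> t \<longleftrightarrow> s = t"
  using SM_chain[of s t] SM_chain[of t s] by (cases s t rule: linorder_cases) auto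

lemma SN_\<beta>_eq_iff: "s \<in> SN \<Longrightarrow> t \<in> SN \<Longrightarrow> \<beta> s = \<beta> t \<longleftrightarrow> s = t"
  using SN_chain[of s t] SN_chain[of t s] by (cases s t rule: linorder_cases) auto

lemma SN_row_eq_iff: "s \<in> SN \<Longrightarrow> t \<in> SN \<Longrightarrow> rr s = rr t \<and> \<alpha> s = \<alpha> t \<longleftrightarrow> s = t"
  using SN_chain[of s t] SN_chain[of t s] by (cases s t rule: linorder_cases) auto

lemma SN_\<beta>_less: "s \<in> SN \<Longrightarrow> t \<in> SN \<Longrightarrow> \<beta> s < \<beta> t \<Longrightarrow> s < t"
  using SN_chain[of t s] by (cases s t rule: linorder_cases) auto

lemma valid_qvar:
  assumes "\<sigma> permutes SM" "\<tau> permutes SN" "i < l"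
  shows "valid (qvar \<sigma> \<tau> i)"
proof -
  have "\<alpha> (\<sigma> i) < m (tgt (rr i))"
  proof (cases "i \<in> SM")
    case True
    then have "\<sigma> i \<in> SM"
      using permutes_in_image[OF assms(1)] by simp
    then show ?thesis
      using valid_entries[OF SM_less[OF \<open>\<sigma> i \<in> SM\<close>]] SM_same_target[OF \<open>\<sigma> i \<in> SM\<close> True]
      by (simp add: valid_var_def)
  qed (use assms valid_entries in \<open>simp add: permutes_not_in valid_var_def\<close>)
  moreover have "\<beta> (\<tau> i) < m (src (rr i))"
  proof (cases "i \<in> SN")
    case True
    then have "\<tau> i \<in> SN"
      using permutes_in_image[OF assms(2)] by simp
    then show ?thesis
      using valid_entries[OF SN_less[OF \<open>\<tau> i \<in> SN\<close>]] SN_same_source[OF \<open>\<tau> i \<in> SN\<close> True]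
      by (simp add: valid_var_def)
  qed (use assms valid_entries in \<open>simp add: permutes_not_in valid_var_def\<close>)
  ultimately show ?thesis
    using valid_entries[OF assms(3)] by (simp add: qvar_def valid_var_def)
qed

lemma lcm_of_diagonals_transposed: "lcm_of_diagonals r tgt src m (transpose_order gt) l SN SM \<beta> \<alpha> rr"
proof unfold_locales
  show "consistent_order r tgt src m (transpose_order gt)"
    by (rule consistent_order_transpose[OF consistent])
  show "transpose_order gt (\<beta> s, \<alpha> s, rr s) (\<beta> t, \<alpha> t, rr t)" if "s < t" "t < l" for s t
    using decreasing[OF that] by (simp add: transpose_order_def)
  show "SN \<union> SM = {..<l}"
    using SM_Un_SN by blast
  show "valid_var r tgt src m (\<beta> i, \<alpha> i, rr i)" if "i < l" for i
    using valid_entries[OF that] by (simp add: valid_var_transpose)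
qed (auto dest: SM_same_target SN_same_source SM_chain SN_chain)

lemma strict_violation_transposed:
  "lcm_of_diagonals.strict_violation SN SM \<beta> \<alpha> rr \<longleftrightarrow> strict_violation"
  unfolding strict_violation_def lcm_of_diagonals.strict_violation_def[OF lcm_of_diagonals_transposed]
  by (subst ex_comm, (rule ex_cong1)+) auto

definition stabilizes_L :: "(nat \<Rightarrow> nat) \<Rightarrow> (nat \<Rightarrow> nat) \<Rightarrow> bool" where
  "stabilizes_L \<sigma> \<tau> \<longleftrightarrow> \<sigma> permutes SM \<and> \<tau> permutes SN \<and>
     image_mset (qvar \<sigma> \<tau>) (mset_set {..<l}) = image_mset pvar (mset_set {..<l})"

lemma stabilizes_L_iff:
  "stabilizes_L \<sigma> \<tau> \<longleftrightarrow> \<sigma> permutes SM \<and> \<tau> permutes SN \<and> Lperm \<sigma> \<tau> = L"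
  unfolding stabilizes_L_def Lperm_def L_def sum_single_eq_iff_image_mset_eq[OF finite_lessThan] ..

lemma stabilizes_L_transposed:
  assumes "stabilizes_L \<sigma> \<tau>"
  shows "lcm_of_diagonals.stabilizes_L l SN SM \<beta> \<alpha> rr \<tau> \<sigma>"
proof -
  interpret transposed: lcm_of_diagonals r tgt src m "transpose_order gt" l SN SM \<beta> \<alpha> rr
    by (rule lcm_of_diagonals_transposed)
  have "transposed.pvar = transpose_var \<circ> pvar" "transposed.qvar \<tau> \<sigma> = transpose_var \<circ> qvar \<sigma> \<tau>"
    by (simp_all add: fun_eq_iff pvar_def qvar_def transposed.pvar_def transposed.qvar_def)
  then show ?thesis
    using assms unfolding stabilizes_L_def transposed.stabilizes_L_def
    by (simp add: multiset.map_comp[symmetric])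
qed

lemma stabilizes_L_qvar_in_image:
  assumes "stabilizes_L \<sigma> \<tau>" "i < l"
  obtains t where "t < l" "qvar \<sigma> \<tau> i = pvar t"
proof -
  have "qvar \<sigma> \<tau> i \<in># image_mset pvar (mset_set {..<l})"
    using assms unfolding stabilizes_L_def by (metis finite_lessThan image_eqI lessThan_iff
        finite_set_mset_mset_set multiset.set_map)
  then show ?thesis
    using that by auto
qed

lemma stabilizes_L_preserves_rr:
  assumes "stabilizes_L \<sigma> \<tau>"
  shows "rr (\<sigma> i) = rr i"
proof (cases "i \<in> SM")
  case True
  have "image_mset (\<lambda>v. (fst v, snd (snd v))) (image_mset (qvar \<sigma> \<tau>) (mset_set {..<l})) =
        image_mset (\<lambda>v. (fst v, snd (snd v))) (image_mset pvar (mset_set {..<l}))"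
    using assms by (simp add: stabilizes_L_def)
  then have "image_mset (\<lambda>t. (\<alpha> (\<sigma> t), rr t)) (mset_set {..<l}) = image_mset (\<lambda>t. (\<alpha> t, rr t)) (mset_set {..<l})"
    by (simp add: multiset.map_comp comp_def qvar_def pvar_def)
  moreover have "inj_on \<alpha> SM"
    using SM_\<alpha>_eq_iff by (auto intro: inj_onI)
  ultimately show ?thesis
    using permutes_preserves_label[of "{..<l}" SM \<sigma> \<alpha> rr i] assms True SM_Un_SN
    by (auto simp: stabilizes_L_def)
next
  case False
  then show ?thesis
    using permutes_not_in[of \<sigma> SM i] assms by (simp add: stabilizes_L_def)
qed

lemma moved_SM_entry_in_SN:
  assumes "stabilizes_L \<sigma> \<tau>" "t \<in> SM" "t \<notin> SN" "\<sigma> t \<noteq> t"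
  obtains t' where "t' \<in> SN" "t' \<notin> SM" "\<alpha> t' = \<alpha> (\<sigma> t)" "\<beta> t' = \<beta> t" "rr t' = rr t"
proof -
  have perms: "\<sigma> permutes SM" "\<tau> permutes SN"
    using assms(1) by (simp_all add: stabilizes_L_def)
  obtain t' where "t' < l" "qvar \<sigma> \<tau> t = pvar t'"
    using stabilizes_L_qvar_in_image[OF assms(1) SM_less[OF assms(2)]] .
  then have t': "\<alpha> t' = \<alpha> (\<sigma> t)" "\<beta> t' = \<beta> t" "rr t' = rr t"
    using permutes_not_in[OF perms(2) assms(3)] by (auto simp: qvar_def pvar_def)
  have "t' \<notin> SM"
  proof
    assume "t' \<in> SM"
    then have "t' = t"
      using SM_column_eq_iff[OF _ assms(2)] t' by blast
    then show False
      using SM_\<alpha>_eq_iff[OF permutes_in_image[OF perms(1), THEN iffD2, OF assms(2)] assms(2)] t' assms(4)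
      by simp
  qed
  then show ?thesis
    using that t' in_SM_or_SN[OF \<open>t' < l\<close>] by blast
qed

lemma stabilizes_L_maps_moved_SM_entries:
  assumes "stabilizes_L \<sigma> \<tau>" "t \<in> SM" "t \<notin> SN" "\<sigma> t \<noteq> t"
  shows "\<sigma> t \<in> SM" "\<sigma> t \<notin> SN" "\<sigma> (\<sigma> t) \<noteq> \<sigma> t"
proof -
  have perm: "\<sigma> permutes SM"
    using assms(1) by (simp add: stabilizes_L_def)
  show "\<sigma> t \<in> SM"
    using permutes_in_image[OF perm] assms(2) by simp
  show "\<sigma> (\<sigma> t) \<noteq> \<sigma> t"
    using assms(4) permutes_inj[OF perm] by (auto dest: injD)
  obtain t' where t': "t' \<in> SN" "t' \<notin> SM" "\<alpha> t' = \<alpha> (\<sigma> t)" "rr t' = rr t"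
    using moved_SM_entry_in_SN[OF assms] by blast
  show "\<sigma> t \<notin> SN"
  proof
    assume "\<sigma> t \<in> SN"
    then have "t' = \<sigma> t"
      using SN_row_eq_iff[OF t'(1) \<open>\<sigma> t \<in> SN\<close>] t' stabilizes_L_preserves_rr[OF assms(1), of t] by simp
    then show False
      using t'(2) \<open>\<sigma> t \<in> SM\<close> by simp
  qed
qed

text \<open>Two entries of \<open>SM - SN\<close> in the same matrix, moved by \<open>\<sigma>\<close> with \<open>\<sigma> i' = i\<^sub>1\<close>, \<open>i' < i\<^sub>1\<close> and
  \<open>\<sigma> i\<^sub>1 < i\<^sub>1\<close>, would have replacements in \<open>SN - SM\<close> with rows ordered one way and columns the
  other, which the diagonal \<open>SN\<close> does not allow.\<close>
lemma stabilizes_L_no_descent: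
  assumes "stabilizes_L \<sigma> \<tau>"
    and i1: "i1 \<in> SM" "i1 \<notin> SN" "\<sigma> i1 \<noteq> i1" "\<sigma> i1 \<in> SM" "\<sigma> i1 < i1"
    and i': "i' \<in> SM" "i' \<notin> SN" "\<sigma> i' \<noteq> i'" "\<sigma> i' = i1" "i' < i1" "rr i' = rr i1"
  shows False
proof -
  have "\<alpha> (\<sigma> i1) < \<alpha> i1" "\<beta> i' < \<beta> i1"
    using SM_chain[OF i1(4,1,5)] SM_chain[OF i'(1) i1(1) i'(5)] i'(6) by auto
  moreover obtain t1 where "t1 \<in> SN" "\<alpha> t1 = \<alpha> (\<sigma> i1)" "\<beta> t1 = \<beta> i1" "rr t1 = rr i1"
    by (rule moved_SM_entry_in_SN[OF assms(1) i1(1-3)])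
  moreover obtain t2 where "t2 \<in> SN" "\<alpha> t2 = \<alpha> (\<sigma> i')" "\<beta> t2 = \<beta> i'" "rr t2 = rr i'"
    by (rule moved_SM_entry_in_SN[OF assms(1) i'(1-3)])
  ultimately show False
    using SN_chain[of t1 t2] SN_chain[of t2 t1] i'(4,6) by (cases t1 t2 rule: linorder_cases) auto
qed

lemma stabilizes_L_fixes_SM_minus_SN:
  assumes "stabilizes_L \<sigma> \<tau>" "i \<in> SM" "i \<notin> SN"
  shows "\<sigma> i = i"
proof (rule ccontr)
  assume "\<sigma> i \<noteq> i"
  define W where "W = {t \<in> SM - SN. \<sigma> t \<noteq> t \<and> rr t = rr i}"
  have "finite W" "i \<in> W"
    using SM_less \<open>\<sigma> i \<noteq> i\<close> assms(2,3) by (auto simp: W_def intro: finite_subset[of _ "{..<l}"])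
  have "\<sigma> ` W \<subseteq> W"
    using stabilizes_L_maps_moved_SM_entries[OF assms(1)] stabilizes_L_preserves_rr[OF assms(1)]
    by (auto simp: W_def)
  then have W_eq: "\<sigma> ` W = W"
    using endo_inj_surj[OF \<open>finite W\<close> \<open>\<sigma> ` W \<subseteq> W\<close>] permutes_inj_on[of \<sigma> SM W] assms(1)
    by (simp add: stabilizes_L_def)
  define i1 where "i1 = Max W"
  have "i1 \<in> W" "\<sigma> i1 \<in> W"
    using Max_in \<open>finite W\<close> \<open>i \<in> W\<close> W_eq by (auto simp: i1_def)
  obtain i' where "i' \<in> W" "\<sigma> i' = i1"
    using W_eq \<open>i1 \<in> W\<close> by (metis imageE)
  have "\<sigma> i1 \<le> i1" "i' \<le> i1"
    using Max_ge[OF \<open>finite W\<close>] \<open>\<sigma> i1 \<in> W\<close> \<open>i' \<in> W\<close> by (simp_all add: i1_def)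
  moreover have "\<sigma> i1 \<noteq> i1"
    using \<open>i1 \<in> W\<close> by (simp add: W_def)
  moreover have "i' \<noteq> i1"
    using \<open>\<sigma> i' = i1\<close> \<open>\<sigma> i1 \<noteq> i1\<close> by blast
  ultimately show False
    using stabilizes_L_no_descent[OF assms(1), of i1 i'] \<open>i1 \<in> W\<close> \<open>\<sigma> i1 \<in> W\<close> \<open>i' \<in> W\<close> \<open>\<sigma> i' = i1\<close>
    by (auto simp: W_def)
qed

lemma stabilizes_L_fixes_SN_minus_SM:
  assumes "stabilizes_L \<sigma> \<tau>" "i \<in> SN" "i \<notin> SM"
  shows "\<tau> i = i"
proof -
  interpret transposed: lcm_of_diagonals r tgt src m "transpose_order gt" l SN SM \<beta> \<alpha> rr
    by (rule lcm_of_diagonals_transposed)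
  show ?thesis
    by (rule transposed.stabilizes_L_fixes_SM_minus_SN[OF stabilizes_L_transposed[OF assms(1)] assms(2,3)])
qed

lemma stabilizes_L_agree:
  assumes "stabilizes_L \<sigma> \<tau>" "i \<in> SM" "i \<in> SN"
  shows "\<sigma> i = \<tau> i"
proof -
  have perms: "\<sigma> permutes SM" "\<tau> permutes SN"
    using assms(1) by (simp_all add: stabilizes_L_def)
  then have "\<sigma> i \<in> SM" "\<tau> i \<in> SN"
    using assms(2,3) by (simp_all add: permutes_in_image)
  obtain t where "t < l" "qvar \<sigma> \<tau> i = pvar t"
    using stabilizes_L_qvar_in_image[OF assms(1) SM_less[OF assms(2)]] .
  then have t: "\<alpha> (\<sigma> i) = \<alpha> t" "\<beta> (\<tau> i) = \<beta> t"
    by (simp_all add: qvar_def pvar_def)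
  consider "t \<in> SM" | "t \<in> SN"
    using in_SM_or_SN[OF \<open>t < l\<close>] by blast
  then show ?thesis
  proof cases
    case 1
    then have "\<sigma> i = t"
      using SM_\<alpha>_eq_iff[OF \<open>\<sigma> i \<in> SM\<close>] t(1) by blast
    moreover have "\<sigma> i \<in> SN"
    proof (rule ccontr)
      assume "\<sigma> i \<notin> SN"
      then have "\<sigma> (\<sigma> i) = \<sigma> i"
        by (rule stabilizes_L_fixes_SM_minus_SN[OF assms(1) \<open>\<sigma> i \<in> SM\<close>])
      then show False
        using permutes_inj[OF perms(1)] assms(3) \<open>\<sigma> i \<notin> SN\<close> by (simp add: inj_eq)
    qed
    ultimately show ?thesis
      using SN_\<beta>_eq_iff[OF \<open>\<tau> i \<in> SN\<close> \<open>\<sigma> i \<in> SN\<close>] t(2) by simp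
  next
    case 2
    then have "\<tau> i = t"
      using SN_\<beta>_eq_iff[OF \<open>\<tau> i \<in> SN\<close>] t(2) by blast
    moreover have "\<tau> i \<in> SM"
    proof (rule ccontr)
      assume "\<tau> i \<notin> SM"
      then have "\<tau> (\<tau> i) = \<tau> i"
        by (rule stabilizes_L_fixes_SN_minus_SM[OF assms(1) \<open>\<tau> i \<in> SN\<close>])
      then show False
        using permutes_inj[OF perms(2)] assms(2) \<open>\<tau> i \<notin> SM\<close> by (simp add: inj_eq)
    qed
    ultimately show ?thesis
      using SM_\<alpha>_eq_iff[OF \<open>\<sigma> i \<in> SM\<close> \<open>\<tau> i \<in> SM\<close>] t(1) by simp
  qed
qed

lemma Lperm_diagonal_eq_L:
  assumes "\<sigma> permutes SM \<inter> SN" "\<forall>i<l. rr (\<sigma> i) = rr i"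
  shows "Lperm \<sigma> \<sigma> = L"
proof -
  have "\<sigma> permutes {..<l}"
    using permutes_subset[OF assms(1)] SM_Un_SN by blast
  have "Lperm \<sigma> \<sigma> = (\<Sum>i<l. Poly_Mapping.single (pvar (\<sigma> i)) 1)"
    unfolding Lperm_def using assms(2) by (intro sum.cong) (simp_all add: qvar_def pvar_def)
  also have "\<dots> = L"
    unfolding L_def using sum.permute[OF \<open>\<sigma> permutes {..<l}\<close>, of "\<lambda>i. Poly_Mapping.single (pvar i) 1"]
    unfolding comp_def by (rule sym)
  finally show ?thesis .
qed

lemma Lperm_eq_L_iff:
  assumes "\<sigma> permutes SM" "\<tau> permutes SN"
  shows "Lperm \<sigma> \<tau> = L \<longleftrightarrow> \<sigma> = \<tau> \<and> \<sigma> permutes SM \<inter> SN \<and> (\<forall>i<l. rr (\<sigma> i) = rr i)"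
proof
  assume "Lperm \<sigma> \<tau> = L"
  then have stab: "stabilizes_L \<sigma> \<tau>"
    using assms by (simp add: stabilizes_L_iff)
  have outside: "\<sigma> i = i" "\<tau> i = i" if "i \<notin> SM \<inter> SN" for i
    using that stabilizes_L_fixes_SM_minus_SN[OF stab] stabilizes_L_fixes_SN_minus_SM[OF stab]
      permutes_not_in[OF assms(1)] permutes_not_in[OF assms(2)] by blast+
  have "\<sigma> = \<tau>"
  proof
    fix i
    show "\<sigma> i = \<tau> i"
      using outside[of i] stabilizes_L_agree[OF stab, of i] by (cases "i \<in> SM \<inter> SN") auto
  qed
  moreover have "\<sigma> permutes SM \<inter> SN"
    using outside assms(1) unfolding permutes_def by blast
  ultimately show "\<sigma> = \<tau> \<and> \<sigma> permutes SM \<inter> SN \<and> (\<forall>i<l. rr (\<sigma> i) = rr i)"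
    using stabilizes_L_preserves_rr[OF stab] by blast
qed (use Lperm_diagonal_eq_L in blast)

lemma valid_mixed_entry: "a < l \<Longrightarrow> b < l \<Longrightarrow> rr a = k \<Longrightarrow> rr b = k \<Longrightarrow> valid (\<alpha> a, \<beta> b, k)"
  using valid_entries[of a] valid_entries[of b] by (simp add: valid_var_def)

lemma keys_L_valid: "x \<in> Poly_Mapping.keys L \<Longrightarrow> valid x"
  using valid_entries unfolding L_def in_keys_sum_single_iff[OF finite_lessThan] by (auto simp: pvar_def)

lemma keys_Lperm_valid: "\<sigma> permutes SM \<Longrightarrow> \<tau> permutes SN \<Longrightarrow> x \<in> Poly_Mapping.keys (Lperm \<sigma> \<tau>) \<Longrightarrow> valid x"
  using valid_qvar unfolding Lperm_def in_keys_sum_single_iff[OF finite_lessThan] by auto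

text \<open>The transpositions \<open>(i k)\<close> and \<open>(j k)\<close> of a strict violation \<open>(i, j, k)\<close> create the variable
  \<open>(\<alpha> i, \<beta> j)\<close>, which does not divide \<open>L\<close> and lies weakly above-left of every other variable
  that they remove or create.\<close>
lemma Lperm_gt_L_if_strict_violation:
  assumes strict_violation
  shows "\<exists>\<sigma> \<tau>. \<sigma> permutes SM \<and> \<tau> permutes SN \<and> lex_gt gt (Lperm \<sigma> \<tau>) L"
proof -
  obtain i j k where ijk: "i \<in> SM" "j \<in> SN" "k \<in> SM" "k \<in> SN" "i \<noteq> j" "i \<noteq> k" "j \<noteq> k"
    and rr: "rr i = rr k" "rr j = rr k"
    and less: "\<alpha> i < \<alpha> j" "\<alpha> j < \<alpha> k" "\<beta> j < \<beta> i" "\<beta> i < \<beta> k"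
    using assms unfolding strict_violation_def by auto
  have "i < l" "j < l" "k < l"
    using ijk SM_less SN_less by auto
  define \<sigma> where "\<sigma> = Transposition.transpose i k"
  define \<tau> where "\<tau> = Transposition.transpose j k"
  define x where "x = (\<alpha> i, \<beta> j, rr k)"
  have valid_ijk: "valid (\<alpha> a, \<beta> b, rr k)" if "a \<in> {i, j, k}" "b \<in> {i, j, k}" for a b
    using that \<open>i < l\<close> \<open>j < l\<close> \<open>k < l\<close> rr by (intro valid_mixed_entry) auto
  have below_x: "ge x (\<alpha> a, \<beta> b, rr k)"
    if "a \<in> {i, j, k}" "b \<in> {i, j, k}" "\<alpha> i \<le> \<alpha> a" "\<beta> j \<le> \<beta> b" for a b
    unfolding x_def using valid_ijk[of i j] valid_ijk[OF that(1,2)] that(3,4) by (intro sink_entry_ge) auto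
  have q: "qvar \<sigma> \<tau> i = (\<alpha> k, \<beta> i, rr k)" "qvar \<sigma> \<tau> j = (\<alpha> j, \<beta> k, rr k)" "qvar \<sigma> \<tau> k = x"
    "t \<notin> {i, j, k} \<Longrightarrow> qvar \<sigma> \<tau> t = pvar t" for t
    using ijk rr by (auto simp: qvar_def pvar_def \<sigma>_def \<tau>_def x_def)
  have "lex_gt gt (Lperm \<sigma> \<tau>) L"
    unfolding Lperm_def L_def
  proof (rule lex_gt_sum_single)
    show "x \<in> qvar \<sigma> \<tau> ` {..<l}"
      using q(3) \<open>k < l\<close> by blast
    show "x \<notin> pvar ` {..<l}"
      using in_SM_or_SN SM_\<alpha>_eq_iff[OF _ ijk(1)] SN_\<beta>_eq_iff[OF _ ijk(2)] less
      by (fastforce simp: pvar_def x_def)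
    show "qvar \<sigma> \<tau> t = y \<longleftrightarrow> pvar t = y" if "gt y x" for t y
    proof -
      have ne: "(\<alpha> a, \<beta> b, rr k) \<noteq> y"
        if "a \<in> {i, j, k}" "b \<in> {i, j, k}" "\<alpha> i \<le> \<alpha> a" "\<beta> j \<le> \<beta> b" for a b
        using below_x[OF that] \<open>gt y x\<close> gt_irrefl gt_trans by blast
      have "pvar t \<noteq> y" "qvar \<sigma> \<tau> t \<noteq> y" if "t \<in> {i, j, k}"
        using that ne[of t t] ne[of k i] ne[of j k] q(1-3) less rr \<open>gt y x\<close> gt_irrefl[of y]
        by (auto simp: pvar_def)
      then show ?thesis
        using q(4)[of t] by (cases "t \<in> {i, j, k}") simp_all
    qed
  qed simp
  moreover have "\<sigma> permutes SM" "\<tau> permutes SN"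
    unfolding \<sigma>_def \<tau>_def using ijk by (simp_all add: permutes_swap_id)
  ultimately show ?thesis
    by blast
qed

definition fixes_below :: "nat \<Rightarrow> (nat \<Rightarrow> nat) \<Rightarrow> (nat \<Rightarrow> nat) \<Rightarrow> bool" where
  "fixes_below n \<sigma> \<tau> \<longleftrightarrow> \<sigma> permutes SM \<and> \<tau> permutes SN \<and> (\<forall>t<n. \<sigma> t = t \<and> \<tau> t = t)"

definition bounded_by :: "nat \<Rightarrow> (nat \<Rightarrow> nat) \<Rightarrow> (nat \<Rightarrow> nat) \<Rightarrow> nat \<Rightarrow> bool" where
  "bounded_by n \<sigma> \<tau> i \<longleftrightarrow> ge (pvar n) (qvar \<sigma> \<tau> i) \<and>
     (qvar \<sigma> \<tau> i = pvar n \<longrightarrow> (\<sigma> i = n \<or> \<sigma> n = n) \<and> (\<tau> i = n \<or> \<tau> n = n))"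

lemma fixes_below_ge:
  assumes "fixes_below n \<sigma> \<tau>" "n \<le> i"
  shows "n \<le> \<sigma> i" "n \<le> \<tau> i"
  using permutes_fixing_below_ge[of \<sigma> SM n i] permutes_fixing_below_ge[of \<tau> SN n i] assms
  by (simp_all add: fixes_below_def)

lemma transposed_fixes_below_bounded_by:
  shows "lcm_of_diagonals.fixes_below SN SM n \<tau> \<sigma> \<longleftrightarrow> fixes_below n \<sigma> \<tau>"
    and "lcm_of_diagonals.bounded_by (transpose_order gt) \<beta> \<alpha> rr n \<tau> \<sigma> i \<longleftrightarrow> bounded_by n \<sigma> \<tau> i"
  unfolding fixes_below_def bounded_by_def pvar_def qvar_def
    lcm_of_diagonals.fixes_below_def[OF lcm_of_diagonals_transposed] lcm_of_diagonals.bounded_by_def[OF lcm_of_diagonals_transposed]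
    lcm_of_diagonals.pvar_def[OF lcm_of_diagonals_transposed] lcm_of_diagonals.qvar_def[OF lcm_of_diagonals_transposed]
  by (auto simp: transpose_order_def)

lemma bounded_by_if_column_fixed:
  assumes "fixes_below n \<sigma> \<tau>" "n \<le> i" "i < l" "i \<in> SM" "i \<notin> SN" "n \<in> SM"
  shows "bounded_by n \<sigma> \<tau> i"
proof -
  have perms: "\<sigma> permutes SM" "\<tau> permutes SN"
    using assms(1) by (simp_all add: fixes_below_def)
  have "\<sigma> i \<in> SM" "\<tau> i = i"
    using assms(4,5) perms by (simp_all add: permutes_in_image permutes_not_in)
  have "ge (pvar n) (qvar \<sigma> \<tau> i)"
    unfolding pvar_def qvar_def
  proof (rule sink_entry_ge)
    show "valid (\<alpha> n, \<beta> n, rr n)" "valid (\<alpha> (\<sigma> i), \<beta> (\<tau> i), rr i)"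
      using valid_entries[of n] valid_qvar[OF perms assms(3)] assms(2,3) by (simp_all add: qvar_def)
    show "tgt (rr n) = tgt (rr i)"
      using SM_same_target assms(4,6) by blast
    show "\<alpha> n \<le> \<alpha> (\<sigma> i)"
      using SM_le[OF assms(6) \<open>\<sigma> i \<in> SM\<close> fixes_below_ge(1)[OF assms(1,2)]] by simp
    show "rr n < rr i \<or> (rr n = rr i \<and> \<beta> n \<le> \<beta> (\<tau> i))"
      using SM_le[OF assms(6,4,2)] \<open>\<tau> i = i\<close> by simp
  qed
  moreover have "\<sigma> i = n \<and> \<tau> i = n" if "qvar \<sigma> \<tau> i = pvar n"
    using that SM_\<alpha>_eq_iff[OF \<open>\<sigma> i \<in> SM\<close> assms(6)] SM_column_eq_iff[OF assms(4,6)] \<open>\<tau> i = i\<close>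
    by (simp add: qvar_def pvar_def)
  ultimately show ?thesis
    by (auto simp: bounded_by_def)
qed

lemma gt_if_column_fixed:
  assumes "fixes_below n \<sigma> \<tau>" "n \<le> i" "i < l" "i \<in> SM" "i \<notin> SN" "n \<notin> SM"
  shows "gt (pvar n) (qvar \<sigma> \<tau> i)"
proof -
  have perms: "\<sigma> permutes SM" "\<tau> permutes SN"
    using assms(1) by (simp_all add: fixes_below_def)
  have "\<sigma> i \<in> SM" "\<tau> i = i"
    using assms(4,5) perms by (simp_all add: permutes_in_image permutes_not_in)
  define j where "j = min i (\<sigma> i)"
  have "j \<in> SM" "j \<le> i" "j \<le> \<sigma> i"
    using assms(4) \<open>\<sigma> i \<in> SM\<close> by (simp_all add: j_def min_def)
  have "n < j"
    using fixes_below_ge(1)[OF assms(1,2)] assms(2,6) \<open>j \<in> SM\<close> \<open>\<sigma> i \<in> SM\<close> assms(4)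
    unfolding j_def by (metis le_neq_implies_less min_def)
  have "ge (pvar j) (qvar \<sigma> \<tau> i)"
    unfolding pvar_def qvar_def
  proof (rule sink_entry_ge)
    show "valid (\<alpha> j, \<beta> j, rr j)" "valid (\<alpha> (\<sigma> i), \<beta> (\<tau> i), rr i)"
      using valid_entries[OF SM_less[OF \<open>j \<in> SM\<close>]] valid_qvar[OF perms assms(3)] by (simp_all add: qvar_def)
    show "tgt (rr j) = tgt (rr i)"
      using SM_same_target \<open>j \<in> SM\<close> assms(4) by blast
    show "\<alpha> j \<le> \<alpha> (\<sigma> i)"
      using SM_le[OF \<open>j \<in> SM\<close> \<open>\<sigma> i \<in> SM\<close> \<open>j \<le> \<sigma> i\<close>] by simp
    show "rr j < rr i \<or> (rr j = rr i \<and> \<beta> j \<le> \<beta> (\<tau> i))"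
      using SM_le[OF \<open>j \<in> SM\<close> assms(4) \<open>j \<le> i\<close>] \<open>\<tau> i = i\<close> by simp
  qed
  then show ?thesis
    by (rule gt_ge_trans[OF pvar_gt[OF \<open>n < j\<close> SM_less[OF \<open>j \<in> SM\<close>]]])
qed

lemma strict_violation_if_column_below:
  assumes "n \<in> SM" "n \<notin> SN" "i \<in> SM" "i \<in> SN" "j \<in> SN" "n < i" "n < j"
    and "rr i = rr n" "\<beta> j < \<beta> n"
  shows strict_violation
proof -
  have n_i: "\<alpha> n < \<alpha> i" "\<beta> n < \<beta> i"
    using SM_chain[OF assms(1,3,6)] assms(8) by auto
  then have "j < i"
    using SN_\<beta>_less[OF assms(5,4)] assms(9) by simp
  then have j_i: "\<beta> j < \<beta> i" "rr j < rr i \<or> (rr j = rr i \<and> \<alpha> j < \<alpha> i)"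
    using SN_chain[OF assms(5,4)] by blast+
  have "rr j = rr n \<and> \<alpha> n < \<alpha> j"
  proof (rule ccontr)
    assume "\<not> (rr j = rr n \<and> \<alpha> n < \<alpha> j)"
    then have "ge (pvar j) (pvar n)"
      unfolding pvar_def using j_i assms(7-9) SN_same_source[OF assms(5,4)]
      by (intro source_entry_ge valid_entries) (auto intro: SN_less[OF assms(5)] SM_less[OF assms(1)])
    then show False
      using pvar_gt[OF assms(7) SN_less[OF assms(5)]] gt_asym gt_irrefl by auto
  qed
  then show ?thesis
    unfolding strict_violation_def using assms \<open>j < i\<close> n_i j_i
    by (intro exI[of _ n] exI[of _ j] exI[of _ i]) auto
qed

lemma bounded_by_if_in_both:
  assumes "\<not> strict_violation" "fixes_below n \<sigma> \<tau>" "n \<le> i" "i < l" "i \<in> SM" "i \<in> SN" "n \<in> SM"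
  shows "bounded_by n \<sigma> \<tau> i"
proof -
  have perms: "\<sigma> permutes SM" "\<tau> permutes SN"
    using assms(2) by (simp_all add: fixes_below_def)
  have "\<sigma> i \<in> SM" "\<tau> i \<in> SN"
    using assms(5,6) perms by (simp_all add: permutes_in_image)
  have "n \<le> \<sigma> i" "n \<le> \<tau> i"
    using fixes_below_ge[OF assms(2,3)] by simp_all
  have column: "rr n < rr i \<or> (rr n = rr i \<and> \<beta> n \<le> \<beta> (\<tau> i))"
  proof (rule ccontr)
    assume "\<not> ?thesis"
    then have "rr i = rr n" "\<beta> (\<tau> i) < \<beta> n"
      using SM_le[OF assms(7,5,3)] by auto
    moreover have "n \<notin> SN"
      using SN_le[OF _ \<open>\<tau> i \<in> SN\<close> \<open>n \<le> \<tau> i\<close>] \<open>\<beta> (\<tau> i) < \<beta> n\<close> by auto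
    moreover have "n < i" "n < \<tau> i"
      using \<open>n \<notin> SN\<close> assms(3,6) \<open>n \<le> \<tau> i\<close> \<open>\<tau> i \<in> SN\<close> by (auto simp: le_less)
    ultimately show False
      using strict_violation_if_column_below[OF assms(7) _ assms(5,6) \<open>\<tau> i \<in> SN\<close>] assms(1) by blast
  qed
  have "ge (pvar n) (qvar \<sigma> \<tau> i)"
    unfolding pvar_def qvar_def
  proof (rule sink_entry_ge)
    show "valid (\<alpha> n, \<beta> n, rr n)" "valid (\<alpha> (\<sigma> i), \<beta> (\<tau> i), rr i)"
      using valid_entries[of n] valid_qvar[OF perms assms(4)] assms(3,4) by (simp_all add: qvar_def)
    show "tgt (rr n) = tgt (rr i)"
      using SM_same_target assms(5,7) by blast
    show "\<alpha> n \<le> \<alpha> (\<sigma> i)"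
      using SM_le[OF assms(7) \<open>\<sigma> i \<in> SM\<close> \<open>n \<le> \<sigma> i\<close>] by simp
  qed (rule column)
  moreover have "\<sigma> i = n \<and> (\<tau> i = n \<or> \<tau> n = n)" if "qvar \<sigma> \<tau> i = pvar n"
    using that SM_\<alpha>_eq_iff[OF \<open>\<sigma> i \<in> SM\<close> assms(7)] SN_\<beta>_eq_iff[OF \<open>\<tau> i \<in> SN\<close>, of n]
      permutes_not_in[OF perms(2), of n]
    by (cases "n \<in> SN") (simp_all add: qvar_def pvar_def)
  ultimately show ?thesis
    by (auto simp: bounded_by_def)
qed

lemma bounded_by_if_in_SM:
  assumes "\<not> strict_violation" "fixes_below n \<sigma> \<tau>" "n \<le> i" "i < l" "i \<in> SM"
  shows "bounded_by n \<sigma> \<tau> i"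
proof -
  interpret transposed: lcm_of_diagonals r tgt src m "transpose_order gt" l SN SM \<beta> \<alpha> rr
    by (rule lcm_of_diagonals_transposed)
  consider "i \<notin> SN" "n \<in> SM" | "i \<notin> SN" "n \<notin> SM" | "i \<in> SN" "n \<in> SM" | "i \<in> SN" "n \<in> SN"
    using in_SM_or_SN[of n] assms(3,4) by (cases "i \<in> SN"; cases "n \<in> SM") auto
  then show ?thesis
  proof cases
    case 1
    then show ?thesis
      using bounded_by_if_column_fixed assms(2-5) by blast
  next
    case 2
    then have "gt (pvar n) (qvar \<sigma> \<tau> i)"
      using gt_if_column_fixed assms(2-5) by blast
    then show ?thesis
      using gt_irrefl[of "pvar n"] by (auto simp: bounded_by_def)
  next
    case 3
    then show ?thesis
      using bounded_by_if_in_both assms by blast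
  next
    case 4
    then show ?thesis
      using transposed.bounded_by_if_in_both[of n \<tau> \<sigma> i] assms
      by (simp add: strict_violation_transposed transposed_fixes_below_bounded_by)
  qed
qed

lemma bounded_by_if_no_strict_violation:
  assumes "\<not> strict_violation" "fixes_below n \<sigma> \<tau>" "n \<le> i" "i < l"
  shows "bounded_by n \<sigma> \<tau> i"
proof (cases "i \<in> SM")
  case False
  interpret transposed: lcm_of_diagonals r tgt src m "transpose_order gt" l SN SM \<beta> \<alpha> rr
    by (rule lcm_of_diagonals_transposed)
  show ?thesis
    using transposed.bounded_by_if_in_SM[of n \<tau> \<sigma> i] assms False in_SM_or_SN[OF assms(4)]
    by (simp add: strict_violation_transposed transposed_fixes_below_bounded_by)
qed (use bounded_by_if_in_SM assms in blast)

lemma L_gt_Lperm_if_below: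
  assumes "fixes_below n \<sigma> \<tau>" "n < l" "\<And>i. n \<le> i \<Longrightarrow> i < l \<Longrightarrow> gt (pvar n) (qvar \<sigma> \<tau> i)"
  shows "lex_gt gt L (Lperm \<sigma> \<tau>)"
proof -
  have fixed: "qvar \<sigma> \<tau> t = pvar t" if "t < n" for t
    using assms(1) that by (simp add: fixes_below_def qvar_def pvar_def)
  have "Poly_Mapping.lookup (Lperm \<sigma> \<tau>) (pvar n) < Poly_Mapping.lookup L (pvar n)"
  proof -
    have "qvar \<sigma> \<tau> t \<noteq> pvar n" if "t < l" for t
      using fixed[of t] pvar_eq_iff[of t n] assms(2) assms(3)[of t] gt_irrefl[of "pvar n"] that
      by (cases "t < n") auto
    then show ?thesis
      unfolding L_def Lperm_def lookup_sum_single using assms(2) by (auto intro!: sum_pos2[of _ n])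
  qed
  moreover have "Poly_Mapping.lookup L y = Poly_Mapping.lookup (Lperm \<sigma> \<tau>) y" if "gt y (pvar n)" for y
  proof -
    have "pvar t = y \<longleftrightarrow> qvar \<sigma> \<tau> t = y" if "t < l" for t
    proof (cases "t < n")
      case False
      then have "n \<le> t"
        by simp
      have "gt y (pvar t)"
        using gt_ge_trans[OF \<open>gt y (pvar n)\<close>] pvar_gt[of n t] \<open>n \<le> t\<close> \<open>t < l\<close>
        by (cases "n = t") auto
      moreover have "gt y (qvar \<sigma> \<tau> t)"
        using gt_trans[OF \<open>gt y (pvar n)\<close> assms(3)[OF \<open>n \<le> t\<close> \<open>t < l\<close>]] .
      ultimately show ?thesis
        using gt_irrefl[of y] by auto
    qed (simp add: fixed)
    then show ?thesis
      unfolding L_def Lperm_def lookup_sum_single by (intro sum.cong) auto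
  qed
  ultimately show ?thesis
    unfolding lex_gt_def by blast
qed

lemma exchange_swap:
  assumes "fixes_below n \<sigma> \<tau>" "n \<le> i" "i < l" "qvar \<sigma> \<tau> i = pvar n"
    and "\<sigma> i = n \<or> \<sigma> n = n" "\<tau> i = n \<or> \<tau> n = n"
  shows "\<exists>\<sigma>' \<tau>'. fixes_below (Suc n) \<sigma>' \<tau>' \<and> Lperm \<sigma>' \<tau>' = Lperm \<sigma> \<tau>"
proof -
  define \<sigma>' where "\<sigma>' = (if \<sigma> i = n then \<sigma> \<circ> Transposition.transpose n i else \<sigma>)"
  define \<tau>' where "\<tau>' = (if \<tau> i = n then \<tau> \<circ> Transposition.transpose n i else \<tau>)"
  have perms: "\<sigma> permutes SM" "\<tau> permutes SN" "\<forall>t<n. \<sigma> t = t" "\<forall>t<n. \<tau> t = t"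
    using assms(1) by (auto simp: fixes_below_def)
  note \<sigma>' = permutes_swap_to_front[OF perms(1,3) assms(2,5), folded \<sigma>'_def]
  note \<tau>' = permutes_swap_to_front[OF perms(2,4) assms(2,6), folded \<tau>'_def]
  have entry: "\<alpha> (\<sigma> i) = \<alpha> n" "\<beta> (\<tau> i) = \<beta> n" "rr i = rr n"
    using assms(4) by (simp_all add: qvar_def pvar_def)
  have "qvar \<sigma>' \<tau>' x = qvar \<sigma> \<tau> (Transposition.transpose n i x)" for x
    using \<sigma>'(2,3,4) \<tau>'(2,3,4) assms(4,5,6) entry
    by (cases "x = n"; cases "x = i") (auto simp: qvar_def pvar_def transpose_def)
  then have "Lperm \<sigma>' \<tau>' = (\<Sum>x<l. Poly_Mapping.single (qvar \<sigma> \<tau> (Transposition.transpose n i x)) 1)"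
    by (simp add: Lperm_def)
  also have "\<dots> = Lperm \<sigma> \<tau>"
  proof -
    have swap: "Transposition.transpose n i permutes {..<l}"
      using assms(2,3) by (intro permutes_swap_id) auto
    show ?thesis
      unfolding Lperm_def using sum.permute[OF swap, of "\<lambda>x. Poly_Mapping.single (qvar \<sigma> \<tau> x) 1"]
      unfolding comp_def by (rule sym)
  qed
  finally show ?thesis
    using \<sigma>'(1,2) \<tau>'(1,2) by (auto simp: fixes_below_def)
qed

lemma straighten_step:
  assumes "\<not> strict_violation" "fixes_below n \<sigma> \<tau>" "n < l" "\<not> lex_gt gt L (Lperm \<sigma> \<tau>)"
  shows "\<exists>\<sigma>' \<tau>'. fixes_below (Suc n) \<sigma>' \<tau>' \<and> Lperm \<sigma>' \<tau>' = Lperm \<sigma> \<tau>"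
proof -
  have bounded: "bounded_by n \<sigma> \<tau> i" if "n \<le> i" "i < l" for i
    using bounded_by_if_no_strict_violation[OF assms(1,2) that] .
  have "\<exists>i. n \<le> i \<and> i < l \<and> qvar \<sigma> \<tau> i = pvar n"
  proof (rule ccontr)
    assume none: "\<not> ?thesis"
    have "gt (pvar n) (qvar \<sigma> \<tau> i)" if "n \<le> i" "i < l" for i
      using bounded[OF that] that none by (auto simp: bounded_by_def)
    then show False
      using L_gt_Lperm_if_below[OF assms(2,3)] assms(4) by blast
  qed
  then obtain i where i: "n \<le> i" "i < l" "qvar \<sigma> \<tau> i = pvar n"
    by blast
  then show ?thesis
    using exchange_swap[OF assms(2) i] bounded[OF i(1,2)] by (simp add: bounded_by_def)
qed

text \<open>Without a strict violation, the variables \<open>p\<^sub>0 > p\<^sub>1 > \<dots>\<close> of \<open>L\<close> can be restored one by one: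
  if \<open>L(\<sigma>, \<tau>)\<close> is not below \<open>L\<close>, the largest remaining variable \<open>p\<^sub>n\<close> occurs in it and can be moved
  to position \<open>n\<close> without changing the monomial.\<close>
lemma Lperm_not_gt_L_if_no_strict_violation:
  assumes "\<not> strict_violation" "\<sigma> permutes SM" "\<tau> permutes SN"
  shows "\<not> lex_gt gt (Lperm \<sigma> \<tau>) L"
proof
  assume "lex_gt gt (Lperm \<sigma> \<tau>) L"
  then have not_below: "\<not> lex_gt gt L (Lperm \<sigma> \<tau>)"
    using lex_gt_asym_valid keys_L_valid keys_Lperm_valid[OF assms(2,3)] by blast
  have "\<exists>\<sigma>' \<tau>'. fixes_below n \<sigma>' \<tau>' \<and> Lperm \<sigma>' \<tau>' = Lperm \<sigma> \<tau>" if "n \<le> l" for n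
    using that
  proof (induction n)
    case 0
    then show ?case
      using assms(2,3) by (auto simp: fixes_below_def)
  next
    case (Suc n)
    then show ?case
      using straighten_step[OF assms(1)] not_below by fastforce
  qed
  then obtain \<sigma>' \<tau>' where "fixes_below l \<sigma>' \<tau>'" "Lperm \<sigma>' \<tau>' = Lperm \<sigma> \<tau>"
    by blast
  moreover have "\<sigma>' x = x \<and> \<tau>' x = x" for x
    using \<open>fixes_below l \<sigma>' \<tau>'\<close> SM_less[of x] SN_less[of x]
    by (cases "x < l") (auto simp: fixes_below_def intro: permutes_not_in)
  then have "\<sigma>' = id" "\<tau>' = id"
    by auto
  ultimately have "Lperm \<sigma> \<tau> = L"
    using Lperm_id by simp
  with \<open>lex_gt gt (Lperm \<sigma> \<tau>) L\<close> show False
    by (simp add: lex_gt_def)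
qed

lemma strict_violation_iff_Lperm_gt_L:
  "strict_violation \<longleftrightarrow> (\<exists>\<sigma> \<tau>. \<sigma> permutes SM \<and> \<tau> permutes SN \<and> lex_gt gt (Lperm \<sigma> \<tau>) L)"
  using Lperm_gt_L_if_strict_violation Lperm_not_gt_L_if_no_strict_violation by blast

end

lemma (in consistent_var_order) lcm_of_diagonals_of_sorted:
  assumes "sorted_wrt gt ps" "sink_diagonal DM" "source_diagonal DN" "set ps \<subseteq> DM \<union> DN"
  shows "lcm_of_diagonals r src tgt m gt (length ps)
    {i. i < length ps \<and> ps ! i \<in> DM} {i. i < length ps \<and> ps ! i \<in> DN}
    (\<lambda>i. fst (ps ! i)) (\<lambda>i. fst (snd (ps ! i))) (\<lambda>i. snd (snd (ps ! i)))"
proof -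
  have DM_valid: "x \<in> DM \<Longrightarrow> valid x" and DN_valid: "x \<in> DN \<Longrightarrow> valid x" for x
    using assms(2,3) unfolding sink_diagonal_def source_diagonal_def by blast+
  have DM_all: "\<forall>(a, b, k)\<in>DM. \<forall>(a', b', k')\<in>DM. tgt k = tgt k' \<and>
      (gt (a, b, k) (a', b', k') \<longrightarrow> a < a' \<and> pair_less (k, b) (k', b'))"
    using assms(2) unfolding sink_diagonal_def by (rule conjunct2)
  have DN_all: "\<forall>(a, b, k)\<in>DN. \<forall>(a', b', k')\<in>DN. src k = src k' \<and>
      (gt (a, b, k) (a', b', k') \<longrightarrow> b < b' \<and> pair_less (k, a) (k', a'))"
    using assms(3) unfolding source_diagonal_def by (rule conjunct2)
  define a b k where "a i = fst (ps ! i)" and "b i = fst (snd (ps ! i))" and "k i = snd (snd (ps ! i))" for i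
  have nth: "ps ! i = (a i, b i, k i)" for i
    by (simp add: a_def b_def k_def)
  have DM: "tgt (k s) = tgt (k t) \<and> (gt (ps ! s) (ps ! t) \<longrightarrow> a s < a t \<and> pair_less (k s, b s) (k t, b t))"
    if "ps ! s \<in> DM" "ps ! t \<in> DM" for s t
    using bspec[OF bspec[OF DM_all that(1)[unfolded nth], unfolded prod.case] that(2)[unfolded nth]]
    unfolding prod.case nth .
  have DN: "src (k s) = src (k t) \<and> (gt (ps ! s) (ps ! t) \<longrightarrow> b s < b t \<and> pair_less (k s, a s) (k t, a t))"
    if "ps ! s \<in> DN" "ps ! t \<in> DN" for s t
    using bspec[OF bspec[OF DN_all that(1)[unfolded nth], unfolded prod.case] that(2)[unfolded nth]]
    unfolding prod.case nth .
  have gt_nth: "gt (ps ! s) (ps ! t)" if "s < t" "t < length ps" for s t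
    using sorted_wrt_nth_less[OF assms(1) that] .
  show ?thesis
    unfolding a_def[symmetric] b_def[symmetric] k_def[symmetric]
  proof unfold_locales
    show "{i. i < length ps \<and> ps ! i \<in> DM} \<union> {i. i < length ps \<and> ps ! i \<in> DN} = {..<length ps}"
      using assms(4) nth_mem by fastforce
    show "valid (a i, b i, k i)" if "i < length ps" for i
      using assms(4) nth_mem[OF that] DM_valid DN_valid unfolding nth by blast
    show "gt (a s, b s, k s) (a t, b t, k t)" if "s < t" "t < length ps" for s t
      using gt_nth[OF that] unfolding nth .
  qed (use DM DN gt_nth in \<open>auto simp: pair_less_def\<close>)
qed

theorem proposition2p13:
  fixes r :: nat and src tgt :: "nat \<Rightarrow> 'v" and m :: "'v \<Rightarrow> nat"
    and gt :: "var \<Rightarrow> var \<Rightarrow> bool"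
    and h :: nat and u v :: nat
    and RM :: "nat list" and CM :: "(nat \<times> nat) list" and M :: "'k::field mpoly"
    and RN :: "(nat \<times> nat) list" and CN :: "nat list" and N :: "'k mpoly"
    and ps :: "var list" and l :: nat
    and SM SN :: "nat set" and \<alpha> \<beta> rr :: "nat \<Rightarrow> nat"
    and Lst :: "(nat \<Rightarrow> nat) \<Rightarrow> (nat \<Rightarrow> nat) \<Rightarrow> mono"
  assumes bipartite: "\<forall>k < r. \<forall>k' < r. tgt k \<noteq> src k'"
    and order: "consistent_order r src tgt m gt"
    and arrow: "h < r"
    and uv: "0 < u" "0 < v"
    and M_minor: "sink_minor r src tgt m (tgt h) u RM CM M"
    and N_minor: "source_minor r src tgt m (src h) v RN CN N"
    and l_def: "l = length ps"
    and ps_sorted: "sorted_wrt gt ps"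
    and L_eq: "mono_lcm (LM gt M) (LM gt N) = (\<Sum>i<l. Poly_Mapping.single (ps ! i) 1)"
    and \<alpha>_def: "\<alpha> = (\<lambda>i. fst (ps ! i))"
    and \<beta>_def: "\<beta> = (\<lambda>i. fst (snd (ps ! i)))"
    and rr_def: "rr = (\<lambda>i. snd (snd (ps ! i)))"
    and SM_def: "SM = {i. i < l \<and> 0 < Poly_Mapping.lookup (LM gt M) (ps ! i)}"
    and SN_def: "SN = {i. i < l \<and> 0 < Poly_Mapping.lookup (LM gt N) (ps ! i)}"
    and Lst_def: "Lst = (\<lambda>\<sigma> \<tau>. \<Sum>i<l. Poly_Mapping.single (\<alpha> (\<sigma> i), \<beta> (\<tau> i), rr i) 1)"
  shows "(\<forall>\<sigma> \<tau>. \<sigma> permutes SM \<longrightarrow> \<tau> permutes SN \<longrightarrow>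
            (Lst \<sigma> \<tau> = mono_lcm (LM gt M) (LM gt N) \<longleftrightarrow>
             \<sigma> = \<tau> \<and> \<sigma> permutes (SM \<inter> SN) \<and> (\<forall>i < l. rr (\<sigma> i) = rr i)))
       \<and> ((\<exists>i j k. i \<in> SM \<and> j \<in> SN \<and> k \<in> SM \<inter> SN \<and> i \<noteq> j \<and> i \<noteq> k \<and> j \<noteq> k \<and>
             rr i = rr j \<and> rr j = rr k \<and> \<alpha> i < \<alpha> j \<and> \<alpha> j < \<alpha> k \<and> \<beta> j < \<beta> i \<and> \<beta> i < \<beta> k)
          \<longleftrightarrow> (\<exists>\<sigma> \<tau>. \<sigma> permutes SM \<and> \<tau> permutes SN \<and>
                 lex_gt gt (Lst \<sigma> \<tau>) (mono_lcm (LM gt M) (LM gt N))))"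
proof -
  interpret consistent_var_order r src tgt m gt
    by unfold_locales (rule order)
  have "Poly_Mapping.keys (mono_lcm (LM gt M) (LM gt N)) = (\<lambda>i. ps ! i) ` {..<l}"
    unfolding L_eq by (rule set_eqI) (rule in_keys_sum_single_iff[OF finite_lessThan])
  moreover have "set ps = (\<lambda>i. ps ! i) ` {..<l}"
    unfolding l_def set_conv_nth by blast
  ultimately have "set ps \<subseteq> Poly_Mapping.keys (LM gt M) \<union> Poly_Mapping.keys (LM gt N)"
    by (simp add: keys_mono_lcm)
  then interpret lcm_of_diagonals r src tgt m gt l SM SN \<alpha> \<beta> rr
    using lcm_of_diagonals_of_sorted[OF ps_sorted sink_minor_LM_diagonal[OF M_minor]
        source_minor_LM_diagonal[OF N_minor]]
    by (simp add: l_def SM_def SN_def \<alpha>_def \<beta>_def rr_def in_keys_iff flip: neq0_conv)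
  have "Lst = Lperm"
    by (intro ext) (simp add: Lst_def Lperm_def qvar_def)
  moreover have "mono_lcm (LM gt M) (LM gt N) = L"
    unfolding L_eq L_def pvar_def by (simp add: \<alpha>_def \<beta>_def rr_def)
  ultimately show ?thesis
    using Lperm_eq_L_iff strict_violation_iff_Lperm_gt_L unfolding strict_violation_def by simp
qed

end
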